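(* Let $k$ be a field of characteristic $0$. If $V$ is a finitely generated $\mathrm{FI}\sharp^m$-module, then there is a single character polynomial $P$ such that $\chi_{V_{\mathbf d}}=P$ on $S_{\mathbf d}$ for all $\mathbf d\in\mathbb{N}^m$.
   Context: $\mathrm{FI}\sharp^m$ is the category with objects $\mathbf d\in\mathbb{N}^m$ and morphisms $\mathbf x\to\mathbf y$ given by pairs $(\mathbf z,f)$ with $\mathbf z\subset\mathbf x$ and $f:\mathbf z\hookrightarrow\mathbf y$ an $m$-tuple of injections (partial injections); an $\mathrm{FI}\sharp^m$-module is a functor from it to $k$-vector spaces, finitely generated if generated by finitely many elements. $S_{\mathbf d}=S_{d_1}\times\cdots\times S_{d_m}$. A character polynomial is an element of $k[\{X^{(i)}_j\}]$, where $X^{(i)}_j$ is the class function on $S_{\mathbf d}$ (for every $\mathbf d$) counting the $j$-cycles in the $S_{d_i}$ component. *)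

theory Defs
  imports Complex_Main "HOL-Library.Poly_Mapping" "HOL-Combinatorics.Permutations"
begin

text \<open>Objects: d in N^m, encoded as d :: nat => nat with d i = 0 for i >= m
  (components indexed 0..m-1).  The underlying "m-tuple of finite sets" of d is
  the disjoint union of the sets {0..<d i}, encoded as pairs (i,a) with i<m, a<d i.\<close>

definition objs :: "nat \<Rightarrow> (nat \<Rightarrow> nat) set" where
  "objs m = {d. \<forall>i\<ge>m. d i = 0}"

definition elems :: "nat \<Rightarrow> (nat \<Rightarrow> nat) \<Rightarrow> (nat \<times> nat) set" where
  "elems m d = {(i, a). i < m \<and> a < d i}"

text \<open>A morphism d -> e is a pair (z, f) with z a subset of d and f : z -> e an
  m-tuple of injections; encoded as a partial map whose domain is z, which is
  injective and maps the i-th component of d into the i-th component of e.\<close>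

definition mors :: "nat \<Rightarrow> (nat \<Rightarrow> nat) \<Rightarrow> (nat \<Rightarrow> nat) \<Rightarrow> ((nat \<times> nat) \<rightharpoonup> (nat \<times> nat)) set" where
  "mors m d e = {f. dom f \<subseteq> elems m d \<and> inj_on f (dom f) \<and>
      (\<forall>x\<in>dom f. fst (the (f x)) = fst x \<and> the (f x) \<in> elems m e)}"

definition id_mor :: "nat \<Rightarrow> (nat \<Rightarrow> nat) \<Rightarrow> ((nat \<times> nat) \<rightharpoonup> (nat \<times> nat))" where
  "id_mor m d = (\<lambda>x. if x \<in> elems m d then Some x else None)"

text \<open>An FI#^m-module: a k-vector space V_d for each object d (realised as a
  subspace of an ambient k-vector space 'v), and k-linear maps F d e f : V_d -> V_e
  for each morphism f : d -> e, functorially.\<close>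

definition FIsharp_module ::
  "('k::field \<Rightarrow> 'v::ab_group_add \<Rightarrow> 'v) \<Rightarrow> nat \<Rightarrow> ((nat \<Rightarrow> nat) \<Rightarrow> 'v set) \<Rightarrow>
   ((nat \<Rightarrow> nat) \<Rightarrow> (nat \<Rightarrow> nat) \<Rightarrow> ((nat \<times> nat) \<rightharpoonup> (nat \<times> nat)) \<Rightarrow> 'v \<Rightarrow> 'v) \<Rightarrow> bool" where
  "FIsharp_module scale m V F \<longleftrightarrow>
     vector_space scale \<and>
     (\<forall>d\<in>objs m. module.subspace scale (V d)) \<and>
     (\<forall>d\<in>objs m. \<forall>e\<in>objs m. \<forall>f\<in>mors m d e.
        (\<forall>x\<in>V d. F d e f x \<in> V e) \<and>
        (\<forall>x\<in>V d. \<forall>y\<in>V d. F d e f (x + y) = F d e f x + F d e f y) \<and>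
        (\<forall>c. \<forall>x\<in>V d. F d e f (scale c x) = scale c (F d e f x))) \<and>
     (\<forall>d\<in>objs m. \<forall>x\<in>V d. F d d (id_mor m d) x = x) \<and>
     (\<forall>d\<in>objs m. \<forall>e\<in>objs m. \<forall>c\<in>objs m. \<forall>f\<in>mors m d e. \<forall>g\<in>mors m e c.
        \<forall>x\<in>V d. F d c (g \<circ>\<^sub>m f) x = F e c g (F d e f x))"

definition finitely_generated ::
  "('k::field \<Rightarrow> 'v::ab_group_add \<Rightarrow> 'v) \<Rightarrow> nat \<Rightarrow> ((nat \<Rightarrow> nat) \<Rightarrow> 'v set) \<Rightarrow>
   ((nat \<Rightarrow> nat) \<Rightarrow> (nat \<Rightarrow> nat) \<Rightarrow> ((nat \<times> nat) \<rightharpoonup> (nat \<times> nat)) \<Rightarrow> 'v \<Rightarrow> 'v) \<Rightarrow> bool" where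
  "finitely_generated scale m V F \<longleftrightarrow>
     (\<exists>G. finite G \<and> (\<forall>(d, x)\<in>G. d \<in> objs m \<and> x \<in> V d) \<and>
        (\<forall>e\<in>objs m. V e = module.span scale
            {F d e f x | d x f. (d, x) \<in> G \<and> f \<in> mors m d e}))"

definition trace_on :: "('k::field \<Rightarrow> 'v::ab_group_add \<Rightarrow> 'v) \<Rightarrow> 'v set \<Rightarrow> ('v \<Rightarrow> 'v) \<Rightarrow> 'k" where
  "trace_on scale W phi =
     (let B = (SOME B. B \<subseteq> W \<and> \<not> module.dependent scale B \<and> module.span scale B = W)
      in \<Sum>b\<in>B. module.representation scale B (phi b) b)"

definition Sd :: "nat \<Rightarrow> (nat \<Rightarrow> nat) \<Rightarrow> (nat \<Rightarrow> nat \<Rightarrow> nat) set" where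
  "Sd m d = {\<sigma>. \<forall>i<m. \<sigma> i permutes {..<d i}}"

definition perm_mor :: "nat \<Rightarrow> (nat \<Rightarrow> nat) \<Rightarrow> (nat \<Rightarrow> nat \<Rightarrow> nat) \<Rightarrow> ((nat \<times> nat) \<rightharpoonup> (nat \<times> nat))" where
  "perm_mor m d \<sigma> = (\<lambda>(i, a). if (i, a) \<in> elems m d then Some (i, \<sigma> i a) else None)"

definition character ::
  "('k::field \<Rightarrow> 'v::ab_group_add \<Rightarrow> 'v) \<Rightarrow> nat \<Rightarrow> ((nat \<Rightarrow> nat) \<Rightarrow> 'v set) \<Rightarrow>
   ((nat \<Rightarrow> nat) \<Rightarrow> (nat \<Rightarrow> nat) \<Rightarrow> ((nat \<times> nat) \<rightharpoonup> (nat \<times> nat)) \<Rightarrow> 'v \<Rightarrow> 'v) \<Rightarrow>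
   (nat \<Rightarrow> nat) \<Rightarrow> (nat \<Rightarrow> nat \<Rightarrow> nat) \<Rightarrow> 'k" where
  "character scale m V F d \<sigma> = trace_on scale (V d) (F d d (perm_mor m d \<sigma>))"

definition orbit_of :: "(nat \<Rightarrow> nat) \<Rightarrow> nat \<Rightarrow> nat set" where
  "orbit_of p a = {(p ^^ k) a | k. True}"

definition num_cycles :: "nat \<Rightarrow> (nat \<Rightarrow> nat) \<Rightarrow> nat \<Rightarrow> nat" where
  "num_cycles n p j = card {orbit_of p a | a. a < n \<and> card (orbit_of p a) = j}"

text \<open>X^{(i)}_j as a class function: the number of j-cycles of the i-th component.\<close>

definition X_var :: "(nat \<Rightarrow> nat) \<Rightarrow> (nat \<Rightarrow> nat \<Rightarrow> nat) \<Rightarrow> nat \<times> nat \<Rightarrow> nat" where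
  "X_var d \<sigma> v = num_cycles (d (fst v)) (\<sigma> (fst v)) (snd v)"

text \<open>A character polynomial: an element of k[X^{(i)}_j : 1 \<le> i \<le> m, j \<ge> 1],
  represented as a finitely supported map from monomials (finitely supported
  exponent maps on variables (i,j), i < m, j \<ge> 1) to coefficients.\<close>

definition is_charpoly :: "nat \<Rightarrow> (((nat \<times> nat) \<Rightarrow>\<^sub>0 nat) \<Rightarrow>\<^sub>0 'k::comm_ring_1) \<Rightarrow> bool" where
  "is_charpoly m P \<longleftrightarrow> (\<forall>mn\<in>Poly_Mapping.keys P. Poly_Mapping.keys mn \<subseteq> {(i, j). i < m \<and> 1 \<le> j})"

definition eval_charpoly :: "(((nat \<times> nat) \<Rightarrow>\<^sub>0 nat) \<Rightarrow>\<^sub>0 'k::comm_ring_1) \<Rightarrow>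
    (nat \<Rightarrow> nat) \<Rightarrow> (nat \<Rightarrow> nat \<Rightarrow> nat) \<Rightarrow> 'k" where
  "eval_charpoly P d \<sigma> =
     (\<Sum>mn\<in>Poly_Mapping.keys P. Poly_Mapping.lookup P mn * (\<Prod>v\<in>Poly_Mapping.keys mn. of_nat (X_var d \<sigma> v) ^ Poly_Mapping.lookup mn v))"

end

theory Submission
  imports Defs "HOL-Combinatorics.Orbits" "HOL-Library.Disjoint_Sets"
begin

text \<open>For \<open>U \<subseteq> d\<close> let \<open>e\<^sub>U\<close> be the action of the partial identity of \<open>U\<close>.
  Since \<open>e\<^sub>U e\<^sub>W = e\<^bsub>U \<inter> W\<^esub>\<close>, Moebius inversion gives operators
  \<open>p\<^sub>T = \<Sum>\<^bsub>U \<subseteq> T\<^esub> (-1)\<^bsup>|T| - |U|\<^esup> e\<^sub>U\<close> with \<open>p\<^sub>T e\<^sub>W = [T \<subseteq> W] p\<^sub>T\<close>,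
  hence pairwise orthogonal idempotents summing to the identity, and \<open>\<sigma> p\<^sub>T = p\<^bsub>\<sigma>T\<^esub> \<sigma>\<close>.
  So \<open>\<chi>(\<sigma>) = \<Sum>\<^sub>T tr(\<sigma> p\<^sub>T)\<close>, and only \<open>\<sigma>\<close>-stable \<open>T\<close> contribute.
  If \<open>|T|\<close> exceeds the degrees of all generators then \<open>p\<^sub>T = 0\<close>, because every image of a
  generator misses some \<open>a \<in> T\<close> and is therefore fixed by \<open>e\<^bsub>d - {a}\<^esub>\<close>.
  For stable \<open>T\<close>, \<open>tr(\<sigma> p\<^sub>T)\<close> depends only on the cycle type of \<open>\<sigma>\<close> on \<open>T\<close>: two such pairs
  are related by partial bijections, and the trace is cyclic. Grouping the stable \<open>T\<close> by cycle
  type \<open>c\<close>, with \<open>h(c)\<close> the common value of \<open>tr(\<sigma> p\<^sub>T)\<close>, gives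
  \<open>\<chi>(\<sigma>) = \<Sum>\<^sub>c h(c) \<Prod>\<^sub>i\<^sub>,\<^sub>j binom(X\<^sup>(\<^sup>i\<^sup>)\<^sub>j(\<sigma>), c\<^sub>i\<^sub>j)\<close>, a finite sum, and
  in characteristic 0 the binomial coefficients are polynomials in the \<open>X\<^sup>(\<^sup>i\<^sup>)\<^sub>j\<close>.\<close>

section \<open>Traces on finite-dimensional subspaces\<close>

definition lin_map_on :: "('k \<Rightarrow> 'v::ab_group_add \<Rightarrow> 'v) \<Rightarrow> 'v set \<Rightarrow> 'v set \<Rightarrow> ('v \<Rightarrow> 'v) \<Rightarrow> bool" where
  "lin_map_on s W W' f \<longleftrightarrow> (\<forall>x\<in>W. f x \<in> W') \<and> (\<forall>x\<in>W. \<forall>y\<in>W. f (x + y) = f x + f y)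
     \<and> (\<forall>c. \<forall>x\<in>W. f (s c x) = s c (f x))"

definition chosen_basis :: "('k::field \<Rightarrow> 'v::ab_group_add \<Rightarrow> 'v) \<Rightarrow> 'v set \<Rightarrow> 'v set" where
  "chosen_basis s W = (SOME B. B \<subseteq> W \<and> \<not> module.dependent s B \<and> module.span s B = W)"

context vector_space
begin

lemma trace_on_chosen_basis:
  "trace_on scale W \<phi> = (\<Sum>b\<in>chosen_basis scale W. representation (chosen_basis scale W) (\<phi> b) b)"
  unfolding trace_on_def chosen_basis_def Let_def by simp

lemma chosen_basis:
  assumes "finite S" "W = span S"
  shows "chosen_basis scale W \<subseteq> W" "independent (chosen_basis scale W)"
    "span (chosen_basis scale W) = W" "finite (chosen_basis scale W)"
proof -
  obtain B where B: "B \<subseteq> W" "independent B" "W \<subseteq> span B"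
    using basis_exists by blast
  have "span B \<subseteq> W" using B(1) assms(2) span_minimal subspace_span by blast
  with B have "\<exists>B. B \<subseteq> W \<and> \<not> dependent B \<and> span B = W" by blast
  then have *: "chosen_basis scale W \<subseteq> W \<and> \<not> dependent (chosen_basis scale W) \<and> span (chosen_basis scale W) = W"
    unfolding chosen_basis_def by (rule someI_ex)
  then show "chosen_basis scale W \<subseteq> W" "independent (chosen_basis scale W)" "span (chosen_basis scale W) = W"
    by auto
  show "finite (chosen_basis scale W)" using independent_span_bound[OF assms(1)] * assms(2) by blast
qed

lemma lin_map_on_in: "lin_map_on scale W W' f \<Longrightarrow> x \<in> W \<Longrightarrow> f x \<in> W'"
  unfolding lin_map_on_def by blast

lemma lin_map_on_add: "lin_map_on scale W W' f \<Longrightarrow> x \<in> W \<Longrightarrow> y \<in> W \<Longrightarrow> f (x + y) = f x + f y"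
  unfolding lin_map_on_def by blast

lemma lin_map_on_scale: "lin_map_on scale W W' f \<Longrightarrow> x \<in> W \<Longrightarrow> f (c *s x) = c *s f x"
  unfolding lin_map_on_def by blast

lemma lin_map_on_zero: "lin_map_on scale W W' f \<Longrightarrow> subspace W \<Longrightarrow> f 0 = 0"
  using lin_map_on_scale[of W W' f 0 0] by (simp add: subspace_0)

lemma lin_map_on_comp:
  "lin_map_on scale W W' f \<Longrightarrow> lin_map_on scale W' W'' g \<Longrightarrow> lin_map_on scale W W'' (g \<circ> f)"
  unfolding lin_map_on_def by auto

lemma lin_map_on_sum:
  assumes "lin_map_on scale W W' f" "subspace W" "\<And>i. i \<in> I \<Longrightarrow> x i \<in> W"
  shows "f (\<Sum>i\<in>I. x i) = (\<Sum>i\<in>I. f (x i))"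
  using assms(3)
proof (induction I rule: infinite_finite_induct)
  case (insert a A)
  have "(\<Sum>i\<in>A. x i) \<in> W" using insert assms(2) subspace_sum by blast
  then show ?case using insert lin_map_on_add[OF assms(1)] by simp
qed (use lin_map_on_zero[OF assms(1,2)] in simp_all)

lemma lin_map_on_lincomb:
  assumes "\<And>i. i \<in> I \<Longrightarrow> lin_map_on scale W W' (f i)" "subspace W'"
  shows "lin_map_on scale W W' (\<lambda>x. \<Sum>i\<in>I. c i *s f i x)"
  unfolding lin_map_on_def
proof (intro conjI ballI allI)
  fix x assume "x \<in> W"
  then show "(\<Sum>i\<in>I. c i *s f i x) \<in> W'"
    using assms by (intro subspace_sum) (auto intro: subspace_scale lin_map_on_in)
next
  fix x y assume "x \<in> W" "y \<in> W"
  then have "(\<Sum>i\<in>I. c i *s f i (x + y)) = (\<Sum>i\<in>I. c i *s f i x + c i *s f i y)"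
    using assms by (intro sum.cong refl) (metis lin_map_on_add scale_right_distrib)
  then show "(\<Sum>i\<in>I. c i *s f i (x + y)) = (\<Sum>i\<in>I. c i *s f i x) + (\<Sum>i\<in>I. c i *s f i y)"
    by (simp add: sum.distrib)
next
  fix a x assume "x \<in> W"
  then have "(\<Sum>i\<in>I. c i *s f i (a *s x)) = (\<Sum>i\<in>I. a *s (c i *s f i x))"
    using assms by (intro sum.cong refl) (metis lin_map_on_scale scale_scale mult.commute)
  then show "(\<Sum>i\<in>I. c i *s f i (a *s x)) = a *s (\<Sum>i\<in>I. c i *s f i x)"
    by (simp add: scale_sum_right)
qed

lemma trace_on_cong:
  assumes "finite S" "W = span S" "\<And>x. x \<in> W \<Longrightarrow> f x = g x"
  shows "trace_on scale W f = trace_on scale W g"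
  unfolding trace_on_chosen_basis using chosen_basis[OF assms(1,2)] assms(3)
  by (intro sum.cong) auto

lemma trace_on_zero:
  assumes "finite S" "W = span S" "\<And>x. x \<in> W \<Longrightarrow> f x = 0"
  shows "trace_on scale W f = 0"
  unfolding trace_on_chosen_basis using chosen_basis[OF assms(1,2)] assms(3)
  by (intro sum.neutral) (auto simp: representation_zero)

lemma trace_on_sum:
  assumes "finite S" "W = span S" "\<And>i x. i \<in> I \<Longrightarrow> x \<in> W \<Longrightarrow> f i x \<in> W"
  shows "trace_on scale W (\<lambda>x. \<Sum>i\<in>I. f i x) = (\<Sum>i\<in>I. trace_on scale W (f i))"
proof -
  note B = chosen_basis[OF assms(1,2)]
  have "trace_on scale W (\<lambda>x. \<Sum>i\<in>I. f i x) =
     (\<Sum>b\<in>chosen_basis scale W. \<Sum>i\<in>I. representation (chosen_basis scale W) (f i b) b)"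
    unfolding trace_on_chosen_basis using B assms(3)
    by (intro sum.cong refl) (subst representation_sum[OF B(2)]; auto)
  also have "\<dots> = (\<Sum>i\<in>I. trace_on scale W (f i))"
    unfolding trace_on_chosen_basis by (rule sum.swap)
  finally show ?thesis .
qed

lemma representation_lin_map_on:
  assumes S: "finite S" "W = span S" and S': "finite S'" "W' = span S'"
    and A: "lin_map_on scale W' W A" and y: "y \<in> W'"
  shows "representation (chosen_basis scale W) (A y) b =
    (\<Sum>c\<in>chosen_basis scale W'. representation (chosen_basis scale W') y c *
       representation (chosen_basis scale W) (A c) b)"
proof -
  note B = chosen_basis[OF S] and C = chosen_basis[OF S']
  let ?rB = "representation (chosen_basis scale W)" and ?rC = "representation (chosen_basis scale W')"
  have sW: "subspace W" "subspace W'" using S S' by auto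
  have "y = (\<Sum>c\<in>chosen_basis scale W'. ?rC y c *s c)"
    using C y by (intro sum_representation_eq[symmetric]) auto
  then have "A y = A (\<Sum>c\<in>chosen_basis scale W'. ?rC y c *s c)" by simp
  also have "\<dots> = (\<Sum>c\<in>chosen_basis scale W'. A (?rC y c *s c))"
    by (rule lin_map_on_sum[OF A sW(2)]) (use C(1) in \<open>auto intro: subspace_scale[OF sW(2)]\<close>)
  also have "\<dots> = (\<Sum>c\<in>chosen_basis scale W'. ?rC y c *s A c)"
    using C(1) by (intro sum.cong refl lin_map_on_scale[OF A]) auto
  finally have "?rB (A y) = ?rB (\<Sum>c\<in>chosen_basis scale W'. ?rC y c *s A c)" by simp
  also have "\<dots> = (\<lambda>b. \<Sum>c\<in>chosen_basis scale W'. ?rB (?rC y c *s A c) b)"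
    by (rule representation_sum[OF B(2)])
      (use B(3) C(1) lin_map_on_in[OF A] sW(1) in \<open>auto simp: subspace_scale subset_iff\<close>)
  finally have "?rB (A y) b = (\<Sum>c\<in>chosen_basis scale W'. ?rB (?rC y c *s A c) b)" by simp
  also have "\<dots> = (\<Sum>c\<in>chosen_basis scale W'. ?rC y c * ?rB (A c) b)"
    using B(3) C(1) lin_map_on_in[OF A] by (intro sum.cong refl) (auto simp: representation_scale[OF B(2)])
  finally show ?thesis .
qed

lemma trace_on_comp_commute:
  assumes S: "finite S" "W = span S" and S': "finite S'" "W' = span S'"
    and A: "lin_map_on scale W' W A" and B: "lin_map_on scale W W' B"
  shows "trace_on scale W (A \<circ> B) = trace_on scale W' (B \<circ> A)"
proof -
  let ?B = "chosen_basis scale W" and ?C = "chosen_basis scale W'"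
  let ?rB = "representation ?B" and ?rC = "representation ?C"
  have "trace_on scale W (A \<circ> B) = (\<Sum>b\<in>?B. \<Sum>c\<in>?C. ?rC (B b) c * ?rB (A c) b)"
    unfolding trace_on_chosen_basis using chosen_basis(1)[OF S] lin_map_on_in[OF B]
    by (intro sum.cong refl) (auto simp: representation_lin_map_on[OF S S' A])
  also have "\<dots> = (\<Sum>c\<in>?C. \<Sum>b\<in>?B. ?rB (A c) b * ?rC (B b) c)"
    by (subst sum.swap) (simp add: mult.commute)
  also have "\<dots> = trace_on scale W' (B \<circ> A)"
    unfolding trace_on_chosen_basis using chosen_basis(1)[OF S'] lin_map_on_in[OF A]
    by (intro sum.cong refl) (auto simp: representation_lin_map_on[OF S' S B])
  finally show ?thesis .
qed

end

section \<open>Morphisms of FI#^m\<close>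

definition map_on :: "(nat \<times> nat) set \<Rightarrow> (nat \<times> nat \<Rightarrow> nat \<times> nat) \<Rightarrow> ((nat \<times> nat) \<rightharpoonup> (nat \<times> nat))" where
  "map_on T f = (\<lambda>x. if x \<in> T then Some (f x) else None)"

definition perm_elem :: "(nat \<Rightarrow> nat \<Rightarrow> nat) \<Rightarrow> nat \<times> nat \<Rightarrow> nat \<times> nat" where
  "perm_elem \<sigma> = (\<lambda>(i, a). (i, \<sigma> i a))"

lemma perm_elem_simp [simp]: "perm_elem \<sigma> (i, a) = (i, \<sigma> i a)"
  unfolding perm_elem_def by simp

lemma fst_perm_elem [simp]: "fst (perm_elem \<sigma> x) = fst x"
  by (cases x) simp

lemma map_on_comp: "map_on U g \<circ>\<^sub>m map_on T f = map_on (T \<inter> f -` U) (g \<circ> f)"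
  unfolding map_on_def map_comp_def by (auto simp: fun_eq_iff)

lemma map_on_cong: "T = T' \<Longrightarrow> (\<And>x. x \<in> T \<Longrightarrow> f x = g x) \<Longrightarrow> map_on T f = map_on T' g"
  unfolding map_on_def by (auto simp: fun_eq_iff)

lemma id_mor_eq: "id_mor m d = map_on (elems m d) id"
  unfolding id_mor_def map_on_def by (simp add: fun_eq_iff)

lemma perm_mor_eq: "perm_mor m d \<sigma> = map_on (elems m d) (perm_elem \<sigma>)"
proof
  fix x show "perm_mor m d \<sigma> x = map_on (elems m d) (perm_elem \<sigma>) x"
    by (cases x) (simp add: perm_mor_def map_on_def)
qed

lemma finite_elems: "finite (elems m d)"
proof -
  have "elems m d = Sigma {..<m} (\<lambda>i. {..<d i})" unfolding elems_def by auto
  then show ?thesis by auto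
qed

lemma map_on_mors:
  assumes "T \<subseteq> elems m d" "inj_on f T" "f ` T \<subseteq> elems m e" "\<And>x. x \<in> T \<Longrightarrow> fst (f x) = fst x"
  shows "map_on T f \<in> mors m d e"
  using assms unfolding mors_def map_on_def by (auto simp: dom_def inj_on_def split: if_splits)

lemma partial_id_mors: "U \<subseteq> elems m d \<Longrightarrow> map_on U id \<in> mors m d d"
  by (rule map_on_mors) auto

lemma ran_mors: "f \<in> mors m d e \<Longrightarrow> ran f \<subseteq> elems m e"
proof
  fix b assume f: "f \<in> mors m d e" and "b \<in> ran f"
  then obtain a where a: "f a = Some b" unfolding ran_def by blast
  then have "the (f a) \<in> elems m e" using f unfolding mors_def by blast
  then show "b \<in> elems m e" using a by simp
qed

lemma card_ran_mors:
  assumes f: "f \<in> mors m d e" shows "card (ran f) \<le> card (elems m d)"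
proof -
  have "ran f = (\<lambda>z. the (f z)) ` dom f" unfolding ran_def dom_def by force
  moreover have "finite (dom f)" using f unfolding mors_def by (auto intro: finite_subset[OF _ finite_elems])
  ultimately have "card (ran f) \<le> card (dom f)" by (simp add: card_image_le)
  also have "\<dots> \<le> card (elems m d)" using f unfolding mors_def by (auto intro: card_mono finite_elems)
  finally show ?thesis .
qed

lemma finite_mors: "finite (mors m d e)"
proof -
  have "mors m d e \<subseteq> (\<Union>A\<in>Pow (elems m d). {f. dom f = A \<and> ran f \<subseteq> elems m e})"
  proof
    fix f assume f: "f \<in> mors m d e"
    then have "dom f \<in> Pow (elems m d)" unfolding mors_def by blast
    then show "f \<in> (\<Union>A\<in>Pow (elems m d). {f. dom f = A \<and> ran f \<subseteq> elems m e})"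
      using ran_mors[OF f] by blast
  qed
  moreover have "finite (\<Union>A\<in>Pow (elems m d). {f. dom f = A \<and> ran f \<subseteq> elems m e})"
    using finite_elems by (intro finite_UN_I finite_set_of_finite_maps) (auto intro: finite_subset)
  ultimately show ?thesis by (rule finite_subset)
qed

lemma map_comp_mors:
  assumes f: "f \<in> mors m a b" and g: "g \<in> mors m b c"
  shows "g \<circ>\<^sub>m f \<in> mors m a c"
  unfolding mors_def
proof (intro CollectI conjI ballI)
  have dsub: "dom (g \<circ>\<^sub>m f) \<subseteq> dom f" by (auto simp: map_comp_def dom_def split: option.splits)
  then show "dom (g \<circ>\<^sub>m f) \<subseteq> elems m a" using f unfolding mors_def by blast
  have key: "x \<in> dom (g \<circ>\<^sub>m f) \<Longrightarrow> \<exists>u w. f x = Some u \<and> g u = Some w \<and> (g \<circ>\<^sub>m f) x = Some w \<and> u \<in> dom g" for x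
    by (auto simp: map_comp_def dom_def split: option.splits)
  show "inj_on (g \<circ>\<^sub>m f) (dom (g \<circ>\<^sub>m f))"
  proof (rule inj_onI)
    fix x y assume x: "x \<in> dom (g \<circ>\<^sub>m f)" and y: "y \<in> dom (g \<circ>\<^sub>m f)" and eq: "(g \<circ>\<^sub>m f) x = (g \<circ>\<^sub>m f) y"
    obtain u w where 1: "f x = Some u" "g u = Some w" "(g \<circ>\<^sub>m f) x = Some w" "u \<in> dom g" using key[OF x] by blast
    obtain u' w' where 2: "f y = Some u'" "g u' = Some w'" "(g \<circ>\<^sub>m f) y = Some w'" "u' \<in> dom g" using key[OF y] by blast
    have "g u = g u'" using 1 2 eq by simp
    then have "u = u'" using g 1(4) 2(4) unfolding mors_def inj_on_def by blast
    moreover have "x \<in> dom f" "y \<in> dom f" using 1 2 by auto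
    ultimately show "x = y" using f 1 2 unfolding mors_def inj_on_def by auto
  qed
  fix x assume x: "x \<in> dom (g \<circ>\<^sub>m f)"
  obtain u w where 1: "f x = Some u" "g u = Some w" "(g \<circ>\<^sub>m f) x = Some w" "u \<in> dom g" using key[OF x] by blast
  have "x \<in> dom f" using 1 by auto
  then have "fst u = fst x" using f 1 unfolding mors_def by force
  moreover have "fst w = fst u" "w \<in> elems m c" using g 1 unfolding mors_def by force+
  ultimately show "fst (the ((g \<circ>\<^sub>m f) x)) = fst x" "the ((g \<circ>\<^sub>m f) x) \<in> elems m c" using 1 by auto
qed

lemma perm_elem_in_elems:
  assumes "\<sigma> \<in> Sd m d" "x \<in> elems m d" shows "perm_elem \<sigma> x \<in> elems m d"
proof (cases x)
  case (Pair i a)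
  then have "i < m" "a < d i" using assms(2) unfolding elems_def by auto
  have "\<sigma> i permutes {..<d i}" using assms(1) \<open>i < m\<close> unfolding Sd_def by blast
  then have "\<sigma> i a \<in> {..<d i}" using \<open>a < d i\<close> permutes_in_image by (metis lessThan_iff)
  then show ?thesis using Pair \<open>i < m\<close> unfolding elems_def by auto
qed

lemma inj_on_perm_elem:
  assumes "\<sigma> \<in> Sd m d" shows "inj_on (perm_elem \<sigma>) (elems m d)"
proof (rule inj_onI)
  fix x y assume "x \<in> elems m d" "y \<in> elems m d" "perm_elem \<sigma> x = perm_elem \<sigma> y"
  moreover obtain i a j b where "x = (i, a)" "y = (j, b)" by fastforce
  ultimately show "x = y" using assms unfolding Sd_def elems_def
    by (auto dest: permutes_inj_on simp: inj_on_def)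
qed

lemma perm_mor_mors:
  assumes "\<sigma> \<in> Sd m d" shows "perm_mor m d \<sigma> \<in> mors m d d"
proof -
  have "perm_elem \<sigma> ` elems m d \<subseteq> elems m d" using perm_elem_in_elems[OF assms] by blast
  then show ?thesis unfolding perm_mor_eq using inj_on_perm_elem[OF assms] by (intro map_on_mors) auto
qed

lemma perm_elem_image_eq_iff:
  assumes "\<sigma> \<in> Sd m d" "T \<subseteq> elems m d"
  shows "perm_elem \<sigma> ` T = T \<longleftrightarrow> perm_elem \<sigma> ` T \<subseteq> T"
proof
  assume sub: "perm_elem \<sigma> ` T \<subseteq> T"
  have "finite T" using assms(2) finite_elems by (rule finite_subset)
  moreover have "card (perm_elem \<sigma> ` T) = card T"
    using inj_on_perm_elem[OF assms(1)] assms(2) by (intro card_image) (auto intro: inj_on_subset)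
  ultimately show "perm_elem \<sigma> ` T = T" using sub by (simp add: card_subset_eq)
qed simp

lemma perm_mor_comp_partial_id:
  assumes "\<sigma> \<in> Sd m d" "U \<subseteq> elems m d"
  shows "perm_mor m d \<sigma> \<circ>\<^sub>m map_on U id = map_on (perm_elem \<sigma> ` U) id \<circ>\<^sub>m perm_mor m d \<sigma>"
proof -
  have "elems m d \<inter> perm_elem \<sigma> -` perm_elem \<sigma> ` U = U"
    using assms(2) inj_on_image_mem_iff[OF inj_on_perm_elem[OF assms(1)] _ assms(2)] by blast
  then show ?thesis
    unfolding perm_mor_eq map_on_comp using assms(2) by (intro map_on_cong) auto
qed

lemma map_on_inv_into_mors:
  assumes \<rho>: "bij_betw \<rho> T T'" and T: "T \<subseteq> elems m d" and T': "T' \<subseteq> elems m d'"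
    and fst: "\<And>x. x \<in> T \<Longrightarrow> fst (\<rho> x) = fst x"
  shows "map_on T \<rho> \<in> mors m d d'" "map_on T' (inv_into T \<rho>) \<in> mors m d' d"
proof -
  show "map_on T \<rho> \<in> mors m d d'"
    using \<rho> T T' fst by (intro map_on_mors) (auto simp: bij_betw_def)
  have inv: "bij_betw (inv_into T \<rho>) T' T" using \<rho> by (rule bij_betw_inv_into)
  have "fst (inv_into T \<rho> y) = fst y" if y: "y \<in> T'" for y
  proof -
    have "inv_into T \<rho> y \<in> T" using bij_betwE[OF inv] y by blast
    then show ?thesis using fst[of "inv_into T \<rho> y"] bij_betw_inv_into_right[OF \<rho> y] by simp
  qed
  then show "map_on T' (inv_into T \<rho>) \<in> mors m d' d"
    using inv T T' by (intro map_on_mors) (auto simp: bij_betw_def)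
qed

lemma map_on_conj_partial_id:
  assumes "bij_betw \<rho> T T'" "U \<subseteq> T"
  shows "map_on T' (inv_into T \<rho>) \<circ>\<^sub>m (map_on (\<rho> ` U) id \<circ>\<^sub>m map_on T \<rho>) = map_on U id"
proof -
  have inj: "inj_on \<rho> T" and img: "\<rho> ` T = T'" using assms(1) by (auto simp: bij_betw_def)
  have "T \<inter> \<rho> -` \<rho> ` U = U" using assms(2) inj_on_image_mem_iff[OF inj _ assms(2)] by blast
  moreover have "U \<inter> \<rho> -` T' = U" using img assms(2) by auto
  ultimately show ?thesis
    unfolding map_on_comp using inj assms(2) by (intro map_on_cong) auto
qed

lemma map_on_conj_perm_mor:
  assumes \<rho>: "bij_betw \<rho> T T'" and T: "T \<subseteq> elems m d" and T': "T' \<subseteq> elems m d'"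
    and stable: "perm_elem \<sigma> ` T = T" and comm: "\<And>x. x \<in> T \<Longrightarrow> \<rho> (perm_elem \<sigma> x) = perm_elem \<sigma>' (\<rho> x)"
  shows "map_on T \<rho> \<circ>\<^sub>m (perm_mor m d \<sigma> \<circ>\<^sub>m map_on T' (inv_into T \<rho>)) =
    perm_mor m d' \<sigma>' \<circ>\<^sub>m map_on T' id"
proof -
  have inv: "\<And>y. y \<in> T' \<Longrightarrow> inv_into T \<rho> y \<in> T"
    using bij_betwE[OF bij_betw_inv_into[OF \<rho>]] by blast
  have "inv_into T \<rho> y \<in> elems m d \<and> perm_elem \<sigma> (inv_into T \<rho> y) \<in> T" if "y \<in> T'" for y
    using inv[OF that] T stable by blast
  then have "T' \<inter> inv_into T \<rho> -` elems m d \<inter> (perm_elem \<sigma> \<circ> inv_into T \<rho>) -` T = T' \<inter> id -` elems m d'"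
    using T' by auto
  moreover have "\<rho> (perm_elem \<sigma> (inv_into T \<rho> y)) = perm_elem \<sigma>' y" if "y \<in> T'" for y
    using comm[OF inv[OF that]] bij_betw_inv_into_right[OF \<rho> that] by simp
  ultimately show ?thesis
    unfolding perm_mor_eq map_on_comp by (intro map_on_cong) auto
qed

section \<open>The idempotents of an FI#-module\<close>

lemma sum_minus_one_power_supersets:
  assumes "finite S" "U \<subseteq> S"
  shows "(\<Sum>T | T \<subseteq> S \<and> U \<subseteq> T. (-1::'a::comm_ring_1) ^ card T) = (if U = S then (-1) ^ card S else 0)"
proof (cases "U = S")
  case True
  then have "{T. T \<subseteq> S \<and> U \<subseteq> T} = {S}" by auto
  then show ?thesis using True by simp
next
  case False
  then have "U \<subset> S" using assms by auto
  have "finite {T. T \<subseteq> S \<and> U \<subseteq> T}" using assms by auto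
  then have "(\<Sum>T | T \<subseteq> S \<and> U \<subseteq> T. (-1::'a) ^ card T) = 0"
    by (rule sum_alternating_cancels) (use card_subsupersets_even_odd[OF assms(1) \<open>U \<subset> S\<close>] in simp)
  then show ?thesis using False by simp
qed

locale fg_FIsharp_module = vector_space scale
  for scale :: "'k::field \<Rightarrow> 'v::ab_group_add \<Rightarrow> 'v" (infixr "*s" 75) +
  fixes m :: nat and V :: "(nat \<Rightarrow> nat) \<Rightarrow> 'v set"
    and F :: "(nat \<Rightarrow> nat) \<Rightarrow> (nat \<Rightarrow> nat) \<Rightarrow> ((nat \<times> nat) \<rightharpoonup> (nat \<times> nat)) \<Rightarrow> 'v \<Rightarrow> 'v"
  assumes module: "FIsharp_module scale m V F" and fin_gen: "finitely_generated scale m V F"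
begin

lemma (in -) fg_FIsharp_moduleI:
  "FIsharp_module scale m V F \<Longrightarrow> finitely_generated scale m V F \<Longrightarrow> fg_FIsharp_module scale m V F"
  unfolding fg_FIsharp_module_def fg_FIsharp_module_axioms_def FIsharp_module_def by blast

lemma subspace_V: "d \<in> objs m \<Longrightarrow> subspace (V d)"
  using module unfolding FIsharp_module_def by blast

lemma lin_map_on_F: "d \<in> objs m \<Longrightarrow> e \<in> objs m \<Longrightarrow> f \<in> mors m d e \<Longrightarrow> lin_map_on scale (V d) (V e) (F d e f)"
  using module unfolding FIsharp_module_def lin_map_on_def by blast

lemma F_in_V: "d \<in> objs m \<Longrightarrow> e \<in> objs m \<Longrightarrow> f \<in> mors m d e \<Longrightarrow> x \<in> V d \<Longrightarrow> F d e f x \<in> V e"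
  using lin_map_on_F lin_map_on_in by blast

lemma F_comp:
  "d \<in> objs m \<Longrightarrow> e \<in> objs m \<Longrightarrow> c \<in> objs m \<Longrightarrow> f \<in> mors m d e \<Longrightarrow> g \<in> mors m e c \<Longrightarrow>
   x \<in> V d \<Longrightarrow> F d c (g \<circ>\<^sub>m f) x = F e c g (F d e f x)"
  using module unfolding FIsharp_module_def by blast

lemma F_id: "d \<in> objs m \<Longrightarrow> x \<in> V d \<Longrightarrow> F d d (map_on (elems m d) id) x = x"
  using module unfolding FIsharp_module_def id_mor_eq by blast

definition gens :: "((nat \<Rightarrow> nat) \<times> 'v) set" where
  "gens = (SOME G. finite G \<and> (\<forall>(d, x)\<in>G. d \<in> objs m \<and> x \<in> V d) \<and>
        (\<forall>e\<in>objs m. V e = span {F d e f x | d x f. (d, x) \<in> G \<and> f \<in> mors m d e}))"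

definition gen_images :: "(nat \<Rightarrow> nat) \<Rightarrow> 'v set" where
  "gen_images e = {F d e f x | d x f. (d, x) \<in> gens \<and> f \<in> mors m d e}"

lemma gens: "finite gens" "\<And>d x. (d, x) \<in> gens \<Longrightarrow> d \<in> objs m \<and> x \<in> V d"
  and V_eq_span: "\<And>e. e \<in> objs m \<Longrightarrow> V e = span (gen_images e)"
proof -
  have "\<exists>G. finite G \<and> (\<forall>(d, x)\<in>G. d \<in> objs m \<and> x \<in> V d) \<and>
        (\<forall>e\<in>objs m. V e = span {F d e f x | d x f. (d, x) \<in> G \<and> f \<in> mors m d e})"
    using fin_gen unfolding finitely_generated_def by blast
  then have "finite gens \<and> (\<forall>(d, x)\<in>gens. d \<in> objs m \<and> x \<in> V d) \<and>
        (\<forall>e\<in>objs m. V e = span (gen_images e))"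
    unfolding gens_def gen_images_def by (rule someI_ex)
  then show "finite gens" "\<And>d x. (d, x) \<in> gens \<Longrightarrow> d \<in> objs m \<and> x \<in> V d"
    "\<And>e. e \<in> objs m \<Longrightarrow> V e = span (gen_images e)"
    by auto
qed

lemma finite_gen_images: "finite (gen_images e)"
proof -
  have "gen_images e = (\<Union>(d, x)\<in>gens. (\<lambda>f. F d e f x) ` mors m d e)"
    unfolding gen_images_def by auto
  then show ?thesis using gens(1) finite_mors by auto
qed

text \<open>\<open>res_op d U\<close> and \<open>proj_op d T\<close> are the operators \<open>e\<^sub>U\<close> and \<open>p\<^sub>T\<close> on \<open>V\<^sub>d\<close>.\<close>

definition res_op :: "(nat \<Rightarrow> nat) \<Rightarrow> (nat \<times> nat) set \<Rightarrow> 'v \<Rightarrow> 'v" where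
  "res_op d U = F d d (map_on U id)"

definition proj_op :: "(nat \<Rightarrow> nat) \<Rightarrow> (nat \<times> nat) set \<Rightarrow> 'v \<Rightarrow> 'v" where
  "proj_op d T x = (\<Sum>U\<in>Pow T. (-1) ^ (card T + card U) *s res_op d U x)"

lemma lin_map_on_res_op: "d \<in> objs m \<Longrightarrow> U \<subseteq> elems m d \<Longrightarrow> lin_map_on scale (V d) (V d) (res_op d U)"
  unfolding res_op_def by (rule lin_map_on_F) (auto intro: partial_id_mors)

lemma res_op_in_V: "d \<in> objs m \<Longrightarrow> U \<subseteq> elems m d \<Longrightarrow> x \<in> V d \<Longrightarrow> res_op d U x \<in> V d"
  using lin_map_on_res_op lin_map_on_in by blast

lemma res_op_res_op:
  "d \<in> objs m \<Longrightarrow> U \<subseteq> elems m d \<Longrightarrow> W \<subseteq> elems m d \<Longrightarrow> x \<in> V d \<Longrightarrow>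
   res_op d U (res_op d W x) = res_op d (U \<inter> W) x"
  unfolding res_op_def using F_comp[of d d d "map_on W id" "map_on U id" x] partial_id_mors
  by (simp add: map_on_comp Int_commute)

lemma res_op_elems: "d \<in> objs m \<Longrightarrow> x \<in> V d \<Longrightarrow> res_op d (elems m d) x = x"
  unfolding res_op_def by (rule F_id)

lemma lin_map_on_proj_op: "d \<in> objs m \<Longrightarrow> T \<subseteq> elems m d \<Longrightarrow> lin_map_on scale (V d) (V d) (proj_op d T)"
  unfolding proj_op_def[abs_def]
  by (rule lin_map_on_lincomb) (auto intro: lin_map_on_res_op subspace_V)

lemma proj_op_in_V: "d \<in> objs m \<Longrightarrow> T \<subseteq> elems m d \<Longrightarrow> x \<in> V d \<Longrightarrow> proj_op d T x \<in> V d"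
  using lin_map_on_proj_op lin_map_on_in by blast

text \<open>If \<open>a \<in> T - W\<close>, the terms of \<open>p\<^sub>T e\<^sub>W\<close> for \<open>U\<close> and \<open>insert a U\<close> cancel.\<close>

lemma proj_op_res_op:
  assumes d: "d \<in> objs m" and T: "T \<subseteq> elems m d" and W: "W \<subseteq> elems m d" and x: "x \<in> V d"
  shows "proj_op d T (res_op d W x) = (if T \<subseteq> W then proj_op d T x else 0)"
proof -
  have fT: "finite T" using T finite_elems by (rule finite_subset)
  let ?t = "\<lambda>U. (-1) ^ (card T + card U) *s res_op d (U \<inter> W) x"
  have "proj_op d T (res_op d W x) = (\<Sum>U\<in>Pow T. ?t U)"
    unfolding proj_op_def using T W d x by (intro sum.cong refl) (auto simp: res_op_res_op)
  also have "\<dots> = (if T \<subseteq> W then proj_op d T x else 0)"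
  proof (cases "T \<subseteq> W")
    case True
    have "(\<Sum>U\<in>Pow T. ?t U) = proj_op d T x"
      unfolding proj_op_def using True by (intro sum.cong refl) (metis Int_absorb2 PowD order_trans)
    then show ?thesis using True by simp
  next
    case False
    then obtain a where a: "a \<in> T" "a \<notin> W" by blast
    define T0 where "T0 = T - {a}"
    have T_eq: "T = insert a T0" and aT0: "a \<notin> T0" and fT0: "finite T0"
      using a fT unfolding T0_def by auto
    have inj: "inj_on (insert a) (Pow T0)"
    proof (rule inj_onI)
      fix U U' assume "U \<in> Pow T0" "U' \<in> Pow T0" and eq: "insert a U = insert a U'"
      then have "a \<notin> U" "a \<notin> U'" using aT0 by auto
      then show "U = U'" using eq by (metis Diff_insert_absorb)
    qed
    have "(\<Sum>U\<in>Pow T. ?t U) = (\<Sum>U\<in>Pow T0. ?t U) + (\<Sum>U\<in>insert a ` Pow T0. ?t U)"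
      unfolding T_eq Pow_insert using fT0 aT0 by (intro sum.union_disjoint) auto
    also have "(\<Sum>U\<in>insert a ` Pow T0. ?t U) = (\<Sum>U\<in>Pow T0. ?t (insert a U))"
      by (rule sum.reindex[OF inj, unfolded comp_def])
    also have "\<dots> = (\<Sum>U\<in>Pow T0. - ?t U)"
    proof (intro sum.cong refl)
      fix U assume U: "U \<in> Pow T0"
      have "a \<notin> U" using U aT0 by auto
      moreover have "finite U" using U fT0 finite_subset by auto
      ultimately have "card (insert a U) = Suc (card U)" by simp
      moreover have "insert a U \<inter> W = U \<inter> W" using a by auto
      ultimately show "?t (insert a U) = - ?t U" by simp
    qed
    finally show ?thesis using False by (simp add: sum_negf)
  qed
  finally show ?thesis .
qed

lemma res_op_proj_op:
  assumes d: "d \<in> objs m" and T: "T \<subseteq> W" and W: "W \<subseteq> elems m d" and x: "x \<in> V d"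
  shows "res_op d W (proj_op d T x) = proj_op d T x"
proof -
  have "res_op d W (proj_op d T x) = (\<Sum>U\<in>Pow T. res_op d W ((-1) ^ (card T + card U) *s res_op d U x))"
    unfolding proj_op_def using assms
    by (intro lin_map_on_sum[OF lin_map_on_res_op subspace_V]) (auto intro!: subspace_scale subspace_V res_op_in_V)
  also have "\<dots> = (\<Sum>U\<in>Pow T. (-1) ^ (card T + card U) *s res_op d U x)"
    using assms
    by (intro sum.cong refl) (auto simp: lin_map_on_scale[OF lin_map_on_res_op] res_op_in_V res_op_res_op Int_absorb1)
  finally show ?thesis unfolding proj_op_def .
qed

lemma proj_op_proj_op:
  assumes d: "d \<in> objs m" and T: "T \<subseteq> elems m d" and T': "T' \<subseteq> elems m d" and x: "x \<in> V d"
  shows "proj_op d T (proj_op d T' x) = (if T = T' then proj_op d T x else 0)"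
proof -
  have fT': "finite T'" using T' finite_elems by (rule finite_subset)
  let ?s = "\<lambda>U. (-1) ^ (card T' + card U) :: 'k"
  have "proj_op d T (proj_op d T' x) = (\<Sum>U\<in>Pow T'. proj_op d T (?s U *s res_op d U x))"
    unfolding proj_op_def[of d T' x] using assms
    by (intro lin_map_on_sum[OF lin_map_on_proj_op subspace_V]) (auto intro!: subspace_scale subspace_V res_op_in_V)
  also have "\<dots> = (\<Sum>U\<in>Pow T'. if T \<subseteq> U then ?s U *s proj_op d T x else 0)"
  proof (intro sum.cong refl)
    fix U assume "U \<in> Pow T'"
    then have U: "U \<subseteq> elems m d" using T' by blast
    show "proj_op d T (?s U *s res_op d U x) = (if T \<subseteq> U then ?s U *s proj_op d T x else 0)"
      by (simp add: lin_map_on_scale[OF lin_map_on_proj_op[OF d T]] res_op_in_V[OF d U x] proj_op_res_op[OF d T U x])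
  qed
  also have "\<dots> = (\<Sum>U \<in> {U \<in> Pow T'. T \<subseteq> U}. ?s U *s proj_op d T x)"
    by (rule sum.inter_filter[symmetric]) (use fT' in simp)
  also have "\<dots> = (\<Sum>U | U \<subseteq> T' \<and> T \<subseteq> U. ?s U *s proj_op d T x)"
    by (rule sum.cong) auto
  also have "\<dots> = ((-1) ^ card T' * (\<Sum>U | U \<subseteq> T' \<and> T \<subseteq> U. (-1) ^ card U)) *s proj_op d T x"
    by (simp add: scale_sum_left sum_distrib_left power_add)
  also have "\<dots> = (if T = T' then proj_op d T x else 0)"
  proof (cases "T \<subseteq> T'")
    case True
    then show ?thesis by (simp add: sum_minus_one_power_supersets[OF fT' True])
  next
    case False
    then have empty: "{U. U \<subseteq> T' \<and> T \<subseteq> U} = {}" by blast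
    show ?thesis using False unfolding empty by auto
  qed
  finally show ?thesis .
qed

lemma sum_proj_op:
  assumes d: "d \<in> objs m" and x: "x \<in> V d"
  shows "(\<Sum>T\<in>Pow (elems m d). proj_op d T x) = x"
proof -
  define E where "E = elems m d"
  have fE: "finite E" unfolding E_def by (rule finite_elems)
  let ?t = "\<lambda>T U. (-1) ^ (card T + card U) *s res_op d U x"
  have "(\<Sum>T\<in>Pow E. proj_op d T x) = (\<Sum>T\<in>Pow E. \<Sum>U | U \<in> Pow E \<and> U \<subseteq> T. ?t T U)"
    unfolding proj_op_def by (intro sum.cong refl arg_cong[where f="\<lambda>A. sum _ A"]) auto
  also have "\<dots> = (\<Sum>U\<in>Pow E. \<Sum>T | T \<in> Pow E \<and> U \<subseteq> T. ?t T U)"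
    using fE by (intro sum.swap_restrict) auto
  also have "\<dots> = (\<Sum>U\<in>Pow E. ((-1) ^ card U * (\<Sum>T | T \<subseteq> E \<and> U \<subseteq> T. (-1) ^ card T)) *s res_op d U x)"
    by (intro sum.cong refl) (simp add: scale_sum_left sum_distrib_left power_add mult.commute)
  also have "\<dots> = (\<Sum>U\<in>Pow E. if U = E then res_op d U x else 0)"
    using fE by (intro sum.cong refl) (auto simp: sum_minus_one_power_supersets power_add[symmetric])
  also have "\<dots> = x" using fE d x by (simp add: E_def res_op_elems)
  finally show ?thesis unfolding E_def .
qed

end

section \<open>The character as a sum over subsets\<close>

context fg_FIsharp_module
begin

definition perm_op :: "(nat \<Rightarrow> nat) \<Rightarrow> (nat \<Rightarrow> nat \<Rightarrow> nat) \<Rightarrow> 'v \<Rightarrow> 'v" where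
  "perm_op d \<sigma> = F d d (perm_mor m d \<sigma>)"

abbreviation tr :: "(nat \<Rightarrow> nat) \<Rightarrow> ('v \<Rightarrow> 'v) \<Rightarrow> 'k" where
  "tr d \<phi> \<equiv> trace_on scale (V d) \<phi>"

lemma lin_map_on_perm_op: "d \<in> objs m \<Longrightarrow> \<sigma> \<in> Sd m d \<Longrightarrow> lin_map_on scale (V d) (V d) (perm_op d \<sigma>)"
  unfolding perm_op_def by (intro lin_map_on_F perm_mor_mors)

lemma perm_op_in_V: "d \<in> objs m \<Longrightarrow> \<sigma> \<in> Sd m d \<Longrightarrow> x \<in> V d \<Longrightarrow> perm_op d \<sigma> x \<in> V d"
  using lin_map_on_perm_op lin_map_on_in by blast

lemma tr_cong: "d \<in> objs m \<Longrightarrow> (\<And>x. x \<in> V d \<Longrightarrow> f x = g x) \<Longrightarrow> tr d f = tr d g"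
  using trace_on_cong[OF finite_gen_images V_eq_span] by blast

lemma tr_zero: "d \<in> objs m \<Longrightarrow> (\<And>x. x \<in> V d \<Longrightarrow> f x = 0) \<Longrightarrow> tr d f = 0"
  using trace_on_zero[OF finite_gen_images V_eq_span] by blast

lemma tr_sum: "d \<in> objs m \<Longrightarrow> (\<And>i x. i \<in> I \<Longrightarrow> x \<in> V d \<Longrightarrow> f i x \<in> V d) \<Longrightarrow>
  tr d (\<lambda>x. \<Sum>i\<in>I. f i x) = (\<Sum>i\<in>I. tr d (f i))"
  using trace_on_sum[OF finite_gen_images V_eq_span] by blast

lemma tr_comp_commute: "d \<in> objs m \<Longrightarrow> d' \<in> objs m \<Longrightarrow> lin_map_on scale (V d') (V d) A \<Longrightarrow>
  lin_map_on scale (V d) (V d') B \<Longrightarrow> tr d (A \<circ> B) = tr d' (B \<circ> A)"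
  using trace_on_comp_commute[OF finite_gen_images V_eq_span finite_gen_images V_eq_span] by blast

lemma perm_op_res_op:
  assumes d: "d \<in> objs m" and \<sigma>: "\<sigma> \<in> Sd m d" and U: "U \<subseteq> elems m d" and x: "x \<in> V d"
  shows "perm_op d \<sigma> (res_op d U x) = res_op d (perm_elem \<sigma> ` U) (perm_op d \<sigma> x)"
proof -
  have U': "perm_elem \<sigma> ` U \<subseteq> elems m d" using perm_elem_in_elems[OF \<sigma>] U by auto
  have "perm_op d \<sigma> (res_op d U x) = F d d (perm_mor m d \<sigma> \<circ>\<^sub>m map_on U id) x"
    unfolding perm_op_def res_op_def using d x U \<sigma>
    by (intro F_comp[symmetric] partial_id_mors perm_mor_mors) auto
  also have "\<dots> = F d d (map_on (perm_elem \<sigma> ` U) id \<circ>\<^sub>m perm_mor m d \<sigma>) x"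
    by (simp add: perm_mor_comp_partial_id[OF \<sigma> U])
  also have "\<dots> = res_op d (perm_elem \<sigma> ` U) (perm_op d \<sigma> x)"
    unfolding perm_op_def res_op_def using d x U' \<sigma> by (intro F_comp partial_id_mors perm_mor_mors) auto
  finally show ?thesis .
qed

lemma perm_op_proj_op:
  assumes d: "d \<in> objs m" and \<sigma>: "\<sigma> \<in> Sd m d" and T: "T \<subseteq> elems m d" and x: "x \<in> V d"
  shows "perm_op d \<sigma> (proj_op d T x) = proj_op d (perm_elem \<sigma> ` T) (perm_op d \<sigma> x)"
proof -
  have inj: "inj_on (perm_elem \<sigma>) T" using inj_on_perm_elem[OF \<sigma>] T by (rule inj_on_subset)
  have injP: "inj_on ((`) (perm_elem \<sigma>)) (Pow T)"
    using inj by (auto simp: inj_on_def inj_on_image_eq_iff)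
  have card: "card (perm_elem \<sigma> ` U) = card U" if "U \<in> Pow T" for U
    using that inj by (auto intro: card_image inj_on_subset)
  let ?c = "\<lambda>U. (-1) ^ (card T + card U) :: 'k"
  have "perm_op d \<sigma> (proj_op d T x) = (\<Sum>U\<in>Pow T. perm_op d \<sigma> (?c U *s res_op d U x))"
    unfolding proj_op_def using d \<sigma> x T
    by (intro lin_map_on_sum[OF lin_map_on_perm_op subspace_V]) (auto intro!: subspace_scale subspace_V res_op_in_V)
  also have "\<dots> = (\<Sum>U\<in>Pow T. ?c U *s res_op d (perm_elem \<sigma> ` U) (perm_op d \<sigma> x))"
    using d \<sigma> x T
    by (intro sum.cong refl) (auto simp: lin_map_on_scale[OF lin_map_on_perm_op] res_op_in_V perm_op_res_op)
  also have "\<dots> = proj_op d (perm_elem \<sigma> ` T) (perm_op d \<sigma> x)"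
    unfolding proj_op_def image_Pow_surj[OF refl, symmetric] sum.reindex[OF injP]
    using card card_image[OF inj] by (intro sum.cong refl) auto
  finally show ?thesis .
qed

lemma trace_perm_op_eq_sum:
  assumes d: "d \<in> objs m" and \<sigma>: "\<sigma> \<in> Sd m d"
  shows "tr d (perm_op d \<sigma>) = (\<Sum>T\<in>Pow (elems m d). tr d (perm_op d \<sigma> \<circ> proj_op d T))"
proof -
  have "tr d (perm_op d \<sigma>) = tr d (\<lambda>x. \<Sum>T\<in>Pow (elems m d). (perm_op d \<sigma> \<circ> proj_op d T) x)"
  proof (rule tr_cong[OF d])
    fix x assume x: "x \<in> V d"
    have "perm_op d \<sigma> x = perm_op d \<sigma> (\<Sum>T\<in>Pow (elems m d). proj_op d T x)" using sum_proj_op[OF d x] by simp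
    also have "\<dots> = (\<Sum>T\<in>Pow (elems m d). perm_op d \<sigma> (proj_op d T x))"
      using d \<sigma> x by (intro lin_map_on_sum[OF lin_map_on_perm_op subspace_V]) (auto intro: proj_op_in_V)
    finally show "perm_op d \<sigma> x = (\<Sum>T\<in>Pow (elems m d). (perm_op d \<sigma> \<circ> proj_op d T) x)" by simp
  qed
  also have "\<dots> = (\<Sum>T\<in>Pow (elems m d). tr d (perm_op d \<sigma> \<circ> proj_op d T))"
    using d \<sigma> by (intro tr_sum) (auto intro: proj_op_in_V perm_op_in_V)
  finally show ?thesis .
qed

text \<open>Cyclicity of the trace and \<open>p\<^sub>T \<sigma> p\<^sub>T = p\<^sub>T p\<^sub>\<sigma>\<^sub>T \<sigma> = 0\<close>.\<close>

lemma trace_perm_op_proj_op_unstable: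
  assumes d: "d \<in> objs m" and \<sigma>: "\<sigma> \<in> Sd m d" and T: "T \<subseteq> elems m d"
    and unstable: "perm_elem \<sigma> ` T \<noteq> T"
  shows "tr d (perm_op d \<sigma> \<circ> proj_op d T) = 0"
proof -
  have \<sigma>T: "perm_elem \<sigma> ` T \<subseteq> elems m d" using perm_elem_in_elems[OF \<sigma>] T by auto
  have "tr d (perm_op d \<sigma> \<circ> proj_op d T) = tr d ((perm_op d \<sigma> \<circ> proj_op d T) \<circ> proj_op d T)"
    by (intro tr_cong[OF d]) (simp add: proj_op_proj_op[OF d T T])
  also have "\<dots> = tr d (proj_op d T \<circ> (perm_op d \<sigma> \<circ> proj_op d T))"
    using lin_map_on_comp[OF lin_map_on_proj_op[OF d T] lin_map_on_perm_op[OF d \<sigma>]] lin_map_on_proj_op[OF d T]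
    by (rule tr_comp_commute[OF d d])
  also have "\<dots> = 0"
  proof (rule tr_zero[OF d])
    fix x assume x: "x \<in> V d"
    have "T \<noteq> perm_elem \<sigma> ` T" using unstable by auto
    then show "(proj_op d T \<circ> (perm_op d \<sigma> \<circ> proj_op d T)) x = 0"
      using proj_op_proj_op[OF d T \<sigma>T perm_op_in_V[OF d \<sigma> x]] perm_op_proj_op[OF d \<sigma> T x] by simp
  qed
  finally show ?thesis .
qed

lemma res_op_transport:
  assumes d: "d \<in> objs m" and d': "d' \<in> objs m" and T: "T \<subseteq> elems m d" and T': "T' \<subseteq> elems m d'"
    and \<rho>: "bij_betw \<rho> T T'" and fst_\<rho>: "\<And>x. x \<in> T \<Longrightarrow> fst (\<rho> x) = fst x"
    and U: "U \<subseteq> T" and x: "x \<in> V d"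
  shows "res_op d U x =
    F d' d (map_on T' (inv_into T \<rho>)) (res_op d' (\<rho> ` U) (F d d' (map_on T \<rho>) x))"
proof -
  note mors = map_on_inv_into_mors[OF \<rho> T T' fst_\<rho>]
  have U': "\<rho> ` U \<subseteq> elems m d'" using U T' bij_betwE[OF \<rho>] by blast
  have "res_op d U x =
      F d d (map_on T' (inv_into T \<rho>) \<circ>\<^sub>m (map_on (\<rho> ` U) id \<circ>\<^sub>m map_on T \<rho>)) x"
    unfolding res_op_def map_on_conj_partial_id[OF \<rho> U] ..
  also have "\<dots> = F d' d (map_on T' (inv_into T \<rho>)) (F d d' (map_on (\<rho> ` U) id \<circ>\<^sub>m map_on T \<rho>) x)"
    using d d' x mors partial_id_mors[OF U'] by (intro F_comp map_comp_mors)
  also have "F d d' (map_on (\<rho> ` U) id \<circ>\<^sub>m map_on T \<rho>) x = res_op d' (\<rho> ` U) (F d d' (map_on T \<rho>) x)"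
    unfolding res_op_def using d d' x mors U' by (intro F_comp partial_id_mors)
  finally show ?thesis .
qed

lemma proj_op_transport:
  assumes d: "d \<in> objs m" and d': "d' \<in> objs m" and T: "T \<subseteq> elems m d" and T': "T' \<subseteq> elems m d'"
    and \<rho>: "bij_betw \<rho> T T'" and fst_\<rho>: "\<And>x. x \<in> T \<Longrightarrow> fst (\<rho> x) = fst x" and x: "x \<in> V d"
  shows "proj_op d T x =
    F d' d (map_on T' (inv_into T \<rho>)) (proj_op d' T' (F d d' (map_on T \<rho>) x))"
proof -
  note mors = map_on_inv_into_mors[OF \<rho> T T' fst_\<rho>]
  define A where "A = F d d' (map_on T \<rho>)"
  define B where "B = F d' d (map_on T' (inv_into T \<rho>))"
  have B: "lin_map_on scale (V d') (V d) B" unfolding B_def by (rule lin_map_on_F[OF d' d mors(2)])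
  have Ax: "A x \<in> V d'" unfolding A_def using F_in_V[OF d d' mors(1) x] .
  have inj: "inj_on \<rho> T" and img: "\<rho> ` T = T'" using \<rho> by (auto simp: bij_betw_def)
  have injP: "inj_on ((`) \<rho>) (Pow T)" using inj by (auto simp: inj_on_def inj_on_image_eq_iff)
  have \<rho>U: "\<rho> ` U \<subseteq> elems m d'" "card (\<rho> ` U) = card U" if "U \<in> Pow T" for U
    using that img T' inj by (auto intro: card_image inj_on_subset)
  let ?t = "\<lambda>U'. (-1) ^ (card T' + card U') *s res_op d' U' (A x)"
  have "proj_op d T x = (\<Sum>U\<in>Pow T. (-1) ^ (card T + card U) *s B (res_op d' (\<rho> ` U) (A x)))"
    unfolding proj_op_def A_def B_def using res_op_transport[OF d d' T T' \<rho> fst_\<rho> _ x] by simp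
  also have "\<dots> = (\<Sum>U\<in>Pow T. B (?t (\<rho> ` U)))"
    using \<rho>U Ax bij_betw_same_card[OF \<rho>]
    by (intro sum.cong refl) (simp add: lin_map_on_scale[OF B] res_op_in_V[OF d'])
  also have "\<dots> = B (\<Sum>U\<in>Pow T. ?t (\<rho> ` U))"
    using \<rho>U Ax by (intro lin_map_on_sum[OF B subspace_V[OF d'], symmetric])
      (auto intro!: subspace_scale[OF subspace_V[OF d']] res_op_in_V[OF d'])
  also have "(\<Sum>U\<in>Pow T. ?t (\<rho> ` U)) = proj_op d' T' (A x)"
    unfolding proj_op_def using sum.reindex[OF injP, of ?t] image_Pow_surj[OF img] by simp
  finally show ?thesis unfolding A_def B_def .
qed

lemma perm_op_transport:
  assumes d: "d \<in> objs m" and d': "d' \<in> objs m" and \<sigma>: "\<sigma> \<in> Sd m d" and \<sigma>': "\<sigma>' \<in> Sd m d'"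
    and T: "T \<subseteq> elems m d" and T': "T' \<subseteq> elems m d'" and stable: "perm_elem \<sigma> ` T = T"
    and \<rho>: "bij_betw \<rho> T T'" and fst_\<rho>: "\<And>x. x \<in> T \<Longrightarrow> fst (\<rho> x) = fst x"
    and comm: "\<And>x. x \<in> T \<Longrightarrow> \<rho> (perm_elem \<sigma> x) = perm_elem \<sigma>' (\<rho> x)" and y: "y \<in> V d'"
  shows "F d d' (map_on T \<rho>) (perm_op d \<sigma> (F d' d (map_on T' (inv_into T \<rho>)) y)) =
    perm_op d' \<sigma>' (res_op d' T' y)"
proof -
  note mors = map_on_inv_into_mors[OF \<rho> T T' fst_\<rho>]
  have "perm_op d \<sigma> (F d' d (map_on T' (inv_into T \<rho>)) y) =
      F d' d (perm_mor m d \<sigma> \<circ>\<^sub>m map_on T' (inv_into T \<rho>)) y"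
    unfolding perm_op_def using d d' y mors perm_mor_mors[OF \<sigma>] by (intro F_comp[symmetric])
  moreover have "F d d' (map_on T \<rho>) (F d' d (perm_mor m d \<sigma> \<circ>\<^sub>m map_on T' (inv_into T \<rho>)) y) =
      F d' d' (map_on T \<rho> \<circ>\<^sub>m (perm_mor m d \<sigma> \<circ>\<^sub>m map_on T' (inv_into T \<rho>))) y"
    using d d' y mors perm_mor_mors[OF \<sigma>] by (intro F_comp[symmetric] map_comp_mors)
  moreover have "F d' d' (perm_mor m d' \<sigma>' \<circ>\<^sub>m map_on T' id) y = perm_op d' \<sigma>' (res_op d' T' y)"
    unfolding perm_op_def res_op_def using d' y T' perm_mor_mors[OF \<sigma>'] by (intro F_comp partial_id_mors)
  ultimately show ?thesis
    by (simp add: map_on_conj_perm_mor[OF \<rho> T T' stable comm])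
qed

definition gen_bound :: nat where
  "gen_bound = Max (insert 0 ((\<lambda>(d, x). card (elems m d)) ` gens))"

lemma card_elems_le_gen_bound: "(d, x) \<in> gens \<Longrightarrow> card (elems m d) \<le> gen_bound"
  unfolding gen_bound_def using gens(1) by (intro Max_ge) force+

text \<open>An image of a generator misses some \<open>a \<in> T\<close>, so it is fixed by \<open>e\<^bsub>d - {a}\<^esub>\<close>,
  which \<open>p\<^sub>T\<close> kills.\<close>

lemma proj_op_gen_image:
  assumes d: "d \<in> objs m" and T: "T \<subseteq> elems m d" and large: "gen_bound < card T"
    and y: "y \<in> gen_images d"
  shows "proj_op d T y = 0"
proof -
  obtain d' x' f where y_eq: "y = F d' d f x'" and g: "(d', x') \<in> gens" and f: "f \<in> mors m d' d"
    using y unfolding gen_images_def by blast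
  have d': "d' \<in> objs m" and x': "x' \<in> V d'" using gens(2)[OF g] by auto
  have "card (ran f) < card T"
    using card_ran_mors[OF f] card_elems_le_gen_bound[OF g] large by linarith
  then have "\<not> T \<subseteq> ran f" using finite_subset[OF ran_mors[OF f] finite_elems] by (meson card_mono not_le)
  then obtain a where a: "a \<in> T" "a \<notin> ran f" by blast
  let ?W = "elems m d - {a}"
  have "map_on ?W id \<circ>\<^sub>m f = f"
  proof
    fix z show "(map_on ?W id \<circ>\<^sub>m f) z = f z"
    proof (cases "f z")
      case (Some b)
      then have "b \<in> ran f" unfolding ran_def by blast
      then have "b \<in> ?W" using a ran_mors[OF f] by auto
      then show ?thesis using Some by (simp add: map_comp_def map_on_def)
    qed (simp add: map_comp_def)
  qed
  then have "y = res_op d ?W y"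
    unfolding res_op_def y_eq using d d' f x' F_comp[of d' d d f "map_on ?W id" x'] partial_id_mors[of ?W m d]
    by auto
  then have "proj_op d T y = proj_op d T (res_op d ?W y)" by simp
  also have "\<dots> = 0"
    using proj_op_res_op[OF d T _ F_in_V[OF d' d f x'], of ?W] a y_eq by auto
  finally show ?thesis .
qed

lemma proj_op_large:
  assumes d: "d \<in> objs m" and T: "T \<subseteq> elems m d" and large: "gen_bound < card T" and x: "x \<in> V d"
  shows "proj_op d T x = 0"
proof -
  have lin: "lin_map_on scale (V d) (V d) (proj_op d T)" using lin_map_on_proj_op[OF d T] .
  have "subspace {x \<in> V d. proj_op d T x = 0}"
    unfolding subspace_def using subspace_V[OF d] lin_map_on_zero[OF lin subspace_V[OF d]]
    by (auto simp: lin_map_on_add[OF lin] lin_map_on_scale[OF lin] subspace_add subspace_scale subspace_0)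
  moreover have "x \<in> span (gen_images d)" using x V_eq_span[OF d] by simp
  ultimately have "x \<in> {x \<in> V d. proj_op d T x = 0}"
    using proj_op_gen_image[OF d T large] V_eq_span[OF d]
    by (elim span_subspace_induct) (auto intro: span_base)
  then show ?thesis by simp
qed

lemma trace_perm_op_proj_op_large:
  assumes d: "d \<in> objs m" and \<sigma>: "\<sigma> \<in> Sd m d" and T: "T \<subseteq> elems m d" and large: "gen_bound < card T"
  shows "tr d (perm_op d \<sigma> \<circ> proj_op d T) = 0"
  using proj_op_large[OF d T large] lin_map_on_zero[OF lin_map_on_perm_op[OF d \<sigma>] subspace_V[OF d]]
  by (intro tr_zero[OF d]) simp

text \<open>With \<open>A\<close>, \<open>B\<close> the actions of \<open>\<rho>\<close> and \<open>\<rho>\<inverse>\<close>, \<open>\<sigma> p\<^sub>T = (\<sigma> B) (p\<^bsub>T'\<^esub> A)\<close> and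
  \<open>A \<sigma> B = \<sigma>' e\<^bsub>T'\<^esub>\<close>; cyclicity of the trace does the rest.\<close>

lemma trace_perm_op_proj_op_transport:
  assumes d: "d \<in> objs m" and d': "d' \<in> objs m" and \<sigma>: "\<sigma> \<in> Sd m d" and \<sigma>': "\<sigma>' \<in> Sd m d'"
    and T: "T \<subseteq> elems m d" and T': "T' \<subseteq> elems m d'" and stable: "perm_elem \<sigma> ` T = T"
    and \<rho>: "bij_betw \<rho> T T'" and fst_\<rho>: "\<And>x. x \<in> T \<Longrightarrow> fst (\<rho> x) = fst x"
    and comm: "\<And>x. x \<in> T \<Longrightarrow> \<rho> (perm_elem \<sigma> x) = perm_elem \<sigma>' (\<rho> x)"
  shows "tr d (perm_op d \<sigma> \<circ> proj_op d T) = tr d' (perm_op d' \<sigma>' \<circ> proj_op d' T')"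
proof -
  note mors = map_on_inv_into_mors[OF \<rho> T T' fst_\<rho>]
  define A where "A = F d d' (map_on T \<rho>)"
  define B where "B = F d' d (map_on T' (inv_into T \<rho>))"
  have A: "lin_map_on scale (V d) (V d') A" unfolding A_def by (rule lin_map_on_F[OF d d' mors(1)])
  have B: "lin_map_on scale (V d') (V d) B" unfolding B_def by (rule lin_map_on_F[OF d' d mors(2)])
  have "proj_op d T x = B (proj_op d' T' (A x))" if x: "x \<in> V d" for x
    using x proj_op_transport[OF d d' T T' \<rho> fst_\<rho>] unfolding A_def B_def by simp
  then have "tr d (perm_op d \<sigma> \<circ> proj_op d T) = tr d ((perm_op d \<sigma> \<circ> B) \<circ> (proj_op d' T' \<circ> A))"
    by (intro tr_cong[OF d]) simp
  also have "\<dots> = tr d' ((proj_op d' T' \<circ> A) \<circ> (perm_op d \<sigma> \<circ> B))"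
    using lin_map_on_comp[OF B lin_map_on_perm_op[OF d \<sigma>]] lin_map_on_comp[OF A lin_map_on_proj_op[OF d' T']]
    by (rule tr_comp_commute[OF d d'])
  also have "\<dots> = tr d' (proj_op d' T' \<circ> (perm_op d' \<sigma>' \<circ> res_op d' T'))"
    using perm_op_transport[OF d d' \<sigma> \<sigma>' T T' stable \<rho> fst_\<rho> comm] unfolding A_def B_def
    by (intro tr_cong[OF d']) simp
  also have "\<dots> = tr d' ((perm_op d' \<sigma>' \<circ> res_op d' T') \<circ> proj_op d' T')"
    using lin_map_on_proj_op[OF d' T'] lin_map_on_comp[OF lin_map_on_res_op[OF d' T'] lin_map_on_perm_op[OF d' \<sigma>']]
    by (rule tr_comp_commute[OF d' d'])
  also have "\<dots> = tr d' (perm_op d' \<sigma>' \<circ> proj_op d' T')"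
    using d' T' by (intro tr_cong[OF d']) (simp add: res_op_proj_op)
  finally show ?thesis .
qed

end

section \<open>Orbits and cycle types\<close>

lemma orbit_eq_of_mem: "permutation s \<Longrightarrow> b \<in> orbit s a \<Longrightarrow> orbit s b = orbit s a"
  by (rule orbit_cyclic_eq3[OF cyclic_on_orbit'])

lemma orbit_subset_stable:
  assumes "s ` A \<subseteq> A" "a \<in> A" shows "orbit s a \<subseteq> A"
proof
  fix y assume "y \<in> orbit s a" then show "y \<in> A"
    by induct (use assms in auto)
qed

lemma disjoint_orbits:
  assumes "permutation s" "orbit s a \<noteq> orbit s b" shows "orbit s a \<inter> orbit s b = {}"
  using orbit_eq_of_mem[OF assms(1)] assms(2) by blast

lemma funpow_eq_iff_mod_card_orbit:
  assumes "permutation f"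
  shows "(f ^^ a) b = (f ^^ c) b \<longleftrightarrow> a mod card (orbit f b) = c mod card (orbit f b)"
proof -
  have self: "b \<in> orbit f b" using permutation_self_in_orbit[OF assms] .
  have inj: "inj_on (\<lambda>n. (f ^^ n) b) {0..<funpow_dist1 f b b}"
    by (rule inj_on_funpow_dist1[OF self])
  have p: "card (orbit f b) = funpow_dist1 f b b"
    unfolding orbit_conv_funpow_dist1[OF self] using card_image[OF inj] by simp
  have per: "(f ^^ funpow_dist1 f b b) b = b" by (rule funpow_dist1_prop[OF self])
  show ?thesis
  proof
    assume "(f ^^ a) b = (f ^^ c) b"
    then have "(f ^^ (a mod card (orbit f b))) b = (f ^^ (c mod card (orbit f b))) b"
      unfolding p using funpow_mod_eq[OF per] by simp
    then show "a mod card (orbit f b) = c mod card (orbit f b)"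
      unfolding p using inj by (auto dest: inj_onD)
  qed (metis p funpow_mod_eq[OF per])
qed

lemma bij_betw_orbits_conj:
  fixes s s' :: "'a \<Rightarrow> 'a"
  assumes s: "permutation s" and s': "permutation s'"
    and card: "card (orbit s b) = card (orbit s' b')"
  defines "r \<equiv> (\<lambda>x. (s' ^^ funpow_dist s b x) b')"
  shows "bij_betw r (orbit s b) (orbit s' b')" "\<And>x. x \<in> orbit s b \<Longrightarrow> r (s x) = s' (r x)"
proof -
  let ?p = "card (orbit s b)"
  note P = funpow_eq_iff_mod_card_orbit[OF s, of _ b]
  note P' = funpow_eq_iff_mod_card_orbit[OF s', of _ b', unfolded card[symmetric]]
  have D: "x \<in> orbit s b \<Longrightarrow> (s ^^ funpow_dist s b x) b = x" for x
    by (rule funpow_dist_prop)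
  show "r (s x) = s' (r x)" if x: "x \<in> orbit s b" for x
  proof -
    have "(s ^^ funpow_dist s b (s x)) b = (s ^^ Suc (funpow_dist s b x)) b"
      using D[OF orbit.step[OF x]] D[OF x] by simp
    then have "(s' ^^ funpow_dist s b (s x)) b' = (s' ^^ Suc (funpow_dist s b x)) b'" using P P' by blast
    then show ?thesis unfolding r_def by simp
  qed
  have inj: "inj_on r (orbit s b)"
  proof (rule inj_onI)
    fix x y assume x: "x \<in> orbit s b" and y: "y \<in> orbit s b" and "r x = r y"
    then have "(s ^^ funpow_dist s b x) b = (s ^^ funpow_dist s b y) b" using P P' unfolding r_def by blast
    then show "x = y" using D[OF x] D[OF y] by simp
  qed
  have "r ` orbit s b \<subseteq> orbit s' b'"
    unfolding r_def using funpow_in_orbit[OF permutation_self_in_orbit[OF s']] by blast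
  then have "r ` orbit s b = orbit s' b'"
    using inj card finite_orbit[OF permutation_self_in_orbit[OF s']] by (intro card_subset_eq) (auto simp: card_image)
  then show "bij_betw r (orbit s b) (orbit s' b')" using inj by (simp add: bij_betw_def)
qed

lemma bij_betw_preserving_fibres:
  assumes "finite X" "finite Y" "\<And>j. card {x\<in>X. \<kappa> x = j} = card {y\<in>Y. \<kappa>' y = j}"
  obtains g where "bij_betw g X Y" "\<And>x. x \<in> X \<Longrightarrow> \<kappa>' (g x) = \<kappa> x"
proof -
  have "\<exists>g. bij_betw g {x\<in>X. \<kappa> x = j} {y\<in>Y. \<kappa>' y = j}" for j
    using assms by (intro finite_same_card_bij) auto
  then obtain g where g: "\<And>j. bij_betw (g j) {x\<in>X. \<kappa> x = j} {y\<in>Y. \<kappa>' y = j}" by metis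
  have "bij_betw (\<lambda>x. g (\<kappa> x) x) (\<Union>j. {x\<in>X. \<kappa> x = j}) (\<Union>j. {y\<in>Y. \<kappa>' y = j})"
    by (rule bij_betw_UNION_disjoint)
      (auto simp: disjoint_family_on_def intro: bij_betw_cong[THEN iffD1, OF _ g])
  moreover have "(\<Union>j. {x\<in>X. \<kappa> x = j}) = X" "(\<Union>j. {y\<in>Y. \<kappa>' y = j}) = Y" by auto
  moreover have "\<kappa>' (g (\<kappa> x) x) = \<kappa> x" if "x \<in> X" for x
    using g[of "\<kappa> x"] that unfolding bij_betw_def by auto
  ultimately show ?thesis using that by auto
qed

definition orbits_in :: "('a \<Rightarrow> 'a) \<Rightarrow> 'a set \<Rightarrow> 'a set set" where
  "orbits_in s A = orbit s ` A"

definition cycle_count :: "('a \<Rightarrow> 'a) \<Rightarrow> 'a set \<Rightarrow> nat \<Rightarrow> nat" where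
  "cycle_count s A j = card {Q \<in> orbits_in s A. card Q = j}"

lemma finite_orbits_in: "finite A \<Longrightarrow> finite (orbits_in s A)"
  unfolding orbits_in_def by simp

lemma orbit_of_eq_orbit: "permutation s \<Longrightarrow> orbit_of s a = orbit s a"
  unfolding orbit_of_def by (simp add: orbit_altdef_permutation)

lemma Union_orbits_in:
  assumes "permutation s" "s ` A \<subseteq> A"
  shows "\<Union> (orbits_in s A) = A"
  using orbit_subset_stable[OF assms(2)] permutation_self_in_orbit[OF assms(1)] unfolding orbits_in_def by blast

lemma orbits_in_Union:
  assumes s: "permutation s" and C: "C \<subseteq> orbits_in s S"
  shows "orbits_in s (\<Union>C) = C"
proof
  show "orbits_in s (\<Union>C) \<subseteq> C"
  proof
    fix Q assume "Q \<in> orbits_in s (\<Union>C)"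
    then obtain x Q0 where x: "Q = orbit s x" "x \<in> Q0" "Q0 \<in> C" unfolding orbits_in_def by blast
    then obtain a where "Q0 = orbit s a" using C unfolding orbits_in_def by blast
    then have "Q = Q0" using x orbit_eq_of_mem[OF s] by blast
    then show "Q \<in> C" using x by simp
  qed
  show "C \<subseteq> orbits_in s (\<Union>C)"
  proof
    fix Q assume Q: "Q \<in> C"
    then obtain a where a: "Q = orbit s a" using C unfolding orbits_in_def by blast
    then have "a \<in> \<Union>C" using Q permutation_self_in_orbit[OF s] by blast
    then show "Q \<in> orbits_in s (\<Union>C)" using a unfolding orbits_in_def by blast
  qed
qed

lemma Union_stable:
  assumes "C \<subseteq> orbits_in s S" shows "s ` (\<Union>C) \<subseteq> \<Union>C"
  using assms unfolding orbits_in_def by (auto intro: orbit.step orbit.base)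

lemma cycle_count_le_card: "finite A \<Longrightarrow> cycle_count s A j \<le> card A"
  unfolding cycle_count_def orbits_in_def
  by (rule order_trans[OF card_mono card_image_le]) auto

lemma cycle_count_eq_0:
  assumes s: "permutation s" and A: "finite A" "s ` A \<subseteq> A" and j: "j = 0 \<or> card A < j"
  shows "cycle_count s A j = 0"
proof -
  have "card Q \<noteq> j" if Q: "Q \<in> orbits_in s A" for Q
  proof -
    obtain a where a: "a \<in> A" "Q = orbit s a" using Q unfolding orbits_in_def by blast
    then have "Q \<subseteq> A" "Q \<noteq> {}" using orbit_subset_stable[OF A(2)] permutation_self_in_orbit[OF s] by auto
    then have "0 < card Q" "card Q \<le> card A" using A(1) by (auto simp: card_gt_0_iff intro: finite_subset card_mono)
    then show ?thesis using j by auto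
  qed
  then have none: "{Q \<in> orbits_in s A. card Q = j} = {}" by blast
  show ?thesis unfolding cycle_count_def none by simp
qed

lemma conj_of_cycle_count_eq:
  fixes s s' :: "'a \<Rightarrow> 'a"
  assumes s: "permutation s" and s': "permutation s'"
    and A: "finite A" "s ` A \<subseteq> A" and A': "finite A'" "s' ` A' \<subseteq> A'"
    and count: "\<And>j. cycle_count s A j = cycle_count s' A' j"
  obtains r where "bij_betw r A A'" "\<And>x. x \<in> A \<Longrightarrow> r (s x) = s' (r x)"
proof -
  obtain g where g: "bij_betw g (orbits_in s A) (orbits_in s' A')"
    and card_g: "\<And>Q. Q \<in> orbits_in s A \<Longrightarrow> card (g Q) = card Q"
    by (rule bij_betw_preserving_fibres[of "orbits_in s A" "orbits_in s' A'" card card])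
      (use count A(1) A'(1) in \<open>auto simp: cycle_count_def orbits_in_def\<close>)
  define base where "base Q = (SOME b. b \<in> Q)" for Q :: "'a set"
  have base: "orbit f (base Q) = Q" if f: "permutation f" and Q: "Q \<in> orbit f ` X" for f Q and X :: "'a set"
  proof -
    obtain a where a: "Q = orbit f a" using Q by blast
    have "base Q \<in> Q" unfolding base_def a using permutation_self_in_orbit[OF f] by (rule someI)
    then show ?thesis unfolding a by (rule orbit_eq_of_mem[OF f])
  qed
  define r_on where "r_on Q x = (s' ^^ funpow_dist s (base Q) x) (base (g Q))" for Q x
  define r where "r x = r_on (orbit s x) x" for x
  have r_on: "bij_betw (r_on Q) Q (g Q) \<and> (\<forall>x\<in>Q. r_on Q (s x) = s' (r_on Q x))"
    if Q: "Q \<in> orbits_in s A" for Q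
  proof -
    have gQ: "g Q \<in> orbit s' ` A'" using bij_betwE[OF g] Q unfolding orbits_in_def by blast
    have eq: "orbit s (base Q) = Q" "orbit s' (base (g Q)) = g Q"
      using base[OF s] base[OF s' gQ] Q unfolding orbits_in_def by auto
    have "card (orbit s (base Q)) = card (orbit s' (base (g Q)))"
      unfolding eq using card_g[OF Q] by simp
    from bij_betw_orbits_conj[OF s s' this] show ?thesis
      unfolding eq r_on_def by blast
  qed
  have r_eq: "r x = r_on Q x" if Q: "Q \<in> orbits_in s A" and x: "x \<in> Q" for Q x
  proof -
    obtain a where "Q = orbit s a" using Q unfolding orbits_in_def by blast
    then have "orbit s x = Q" using orbit_eq_of_mem[OF s] x by blast
    then show ?thesis unfolding r_def by simp
  qed
  have "bij_betw r (\<Union>Q\<in>orbits_in s A. Q) (\<Union>Q\<in>orbits_in s A. g Q)"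
  proof (rule bij_betw_UNION_disjoint)
    show "disjoint_family_on g (orbits_in s A)"
    unfolding disjoint_family_on_def
    proof (intro ballI impI)
      fix Q1 Q2 assume Q: "Q1 \<in> orbits_in s A" "Q2 \<in> orbits_in s A" "Q1 \<noteq> Q2"
      then have "g Q1 \<noteq> g Q2" using bij_betw_imp_inj_on[OF g] by (auto dest: inj_onD)
      moreover obtain a1 a2 where "g Q1 = orbit s' a1" "g Q2 = orbit s' a2"
        using bij_betwE[OF g] Q(1,2) unfolding orbits_in_def by blast
      ultimately show "g Q1 \<inter> g Q2 = {}" using disjoint_orbits[OF s'] by simp
    qed
    show "bij_betw r Q (g Q)" if Q: "Q \<in> orbits_in s A" for Q
    proof -
      have "bij_betw r Q (g Q) = bij_betw (r_on Q) Q (g Q)" by (rule bij_betw_cong) (rule r_eq[OF Q])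
      then show ?thesis using r_on[OF Q] by simp
    qed
  qed
  moreover have "(\<Union>Q\<in>orbits_in s A. g Q) = A'"
    using bij_betw_imp_surj_on[OF g] Union_orbits_in[OF s' A'(2)] by simp
  moreover have "r (s x) = s' (r x)" if x: "x \<in> A" for x
  proof -
    have Q: "orbit s x \<in> orbits_in s A" using x unfolding orbits_in_def by blast
    have "x \<in> orbit s x" "s x \<in> orbit s x" using permutation_self_in_orbit[OF s] orbit.base by auto
    then show ?thesis using r_on[OF Q] r_eq[OF Q] by simp
  qed
  ultimately show ?thesis using that Union_orbits_in[OF s A(2)] by simp
qed

section \<open>Counting stable subsets\<close>

lemma card_subsets_with_fibre_sizes:
  fixes \<kappa> :: "'a \<Rightarrow> nat" and c :: "nat \<Rightarrow> nat"
  assumes \<Omega>: "finite \<Omega>" and J: "finite J" and c: "\<And>j. j \<notin> J \<Longrightarrow> c j = 0"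
  shows "card {C. C \<subseteq> \<Omega> \<and> (\<forall>j. card {x\<in>C. \<kappa> x = j} = c j)} =
    (\<Prod>j\<in>J. card {x\<in>\<Omega>. \<kappa> x = j} choose c j)"
proof -
  define L where "L = {C. C \<subseteq> \<Omega> \<and> (\<forall>j. card {x\<in>C. \<kappa> x = j} = c j)}"
  define R where "R = (\<Pi>\<^sub>E j\<in>J. {D. D \<subseteq> {x\<in>\<Omega>. \<kappa> x = j} \<and> card D = c j})"
  have in_J: "\<kappa> x \<in> J" if C: "C \<in> L" and x: "x \<in> C" for C x
  proof (rule ccontr)
    assume "\<kappa> x \<notin> J"
    then have "card {y\<in>C. \<kappa> y = \<kappa> x} = 0" using C c unfolding L_def by auto
    moreover have "finite {y\<in>C. \<kappa> y = \<kappa> x}" using C \<Omega> unfolding L_def by (auto intro: finite_subset)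
    ultimately show False using x by auto
  qed
  have fibres: "{x \<in> (\<Union>j\<in>J. \<Phi> j). \<kappa> x = j} = (if j \<in> J then \<Phi> j else {})" if "\<Phi> \<in> R" for \<Phi> j
    using that unfolding R_def by (auto simp: PiE_iff)
  have "bij_betw (\<lambda>C. restrict (\<lambda>j. {x\<in>C. \<kappa> x = j}) J) L R"
  proof (rule bij_betw_byWitness[where f'="\<lambda>\<Phi>. \<Union>j\<in>J. \<Phi> j"])
    show "\<forall>C\<in>L. (\<Union>j\<in>J. restrict (\<lambda>j. {x\<in>C. \<kappa> x = j}) J j) = C" using in_J by auto
    show "\<forall>\<Phi>\<in>R. restrict (\<lambda>j. {x \<in> (\<Union>j\<in>J. \<Phi> j). \<kappa> x = j}) J = \<Phi>"
      using fibres by (auto simp: R_def PiE_iff extensional_def fun_eq_iff)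
    show "(\<lambda>C. restrict (\<lambda>j. {x\<in>C. \<kappa> x = j}) J) ` L \<subseteq> R" by (auto simp: L_def R_def)
    show "(\<lambda>\<Phi>. \<Union>j\<in>J. \<Phi> j) ` R \<subseteq> L"
      using fibres c by (auto simp: L_def R_def PiE_iff)
  qed
  then have "card L = card R" by (rule bij_betw_same_card)
  also have "card R = (\<Prod>j\<in>J. card {D. D \<subseteq> {x\<in>\<Omega>. \<kappa> x = j} \<and> card D = c j})"
    unfolding R_def using J by (rule card_PiE)
  also have "\<dots> = (\<Prod>j\<in>J. card {x\<in>\<Omega>. \<kappa> x = j} choose c j)"
    using \<Omega> by (intro prod.cong refl n_subsets) auto
  finally show ?thesis unfolding L_def .
qed

lemma card_stable_subsets_with_cycle_counts:
  assumes s: "s permutes {..<n}" and c: "\<And>j. j \<notin> J \<Longrightarrow> c j = 0" and J: "finite J"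
  shows "card {A. A \<subseteq> {..<n} \<and> s ` A \<subseteq> A \<and> (\<forall>j. cycle_count s A j = c j)} =
     (\<Prod>j\<in>J. num_cycles n s j choose c j)"
proof -
  have ps: "permutation s" using s by (auto simp: permutation_permutes)
  define \<Omega> where "\<Omega> = orbits_in s {..<n}"
  have fO: "finite \<Omega>" unfolding \<Omega>_def by (simp add: finite_orbits_in)
  define L where "L = {A. A \<subseteq> {..<n} \<and> s ` A \<subseteq> A \<and> (\<forall>j. cycle_count s A j = c j)}"
  define R where "R = {C. C \<subseteq> \<Omega> \<and> (\<forall>j. card {x\<in>C. card x = j} = c j)}"
  have orbs_sub: "A \<subseteq> {..<n} \<Longrightarrow> orbits_in s A \<subseteq> \<Omega>" for A unfolding \<Omega>_def orbits_in_def by blast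
  have bij: "bij_betw (orbits_in s) L R"
  proof (rule bij_betw_byWitness[where f' = Union])
    show "\<forall>A\<in>L. \<Union> (orbits_in s A) = A" unfolding L_def using Union_orbits_in[OF ps] by blast
    show "\<forall>C\<in>R. orbits_in s (\<Union>C) = C" unfolding R_def \<Omega>_def using orbits_in_Union[OF ps] by blast
    show "orbits_in s ` L \<subseteq> R" unfolding L_def R_def cycle_count_def using orbs_sub by auto
    show "Union ` R \<subseteq> L"
    proof
      fix A assume "A \<in> Union ` R"
      then obtain C where C: "C \<in> R" "A = \<Union>C" by blast
      have sub: "C \<subseteq> orbits_in s {..<n}" using C unfolding R_def \<Omega>_def by blast
      have "A \<subseteq> {..<n}" using sub C(2) permutes_orbit_subset[OF s] unfolding orbits_in_def by blast
      moreover have "s ` A \<subseteq> A" using Union_stable[OF sub] C(2) by simp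
      moreover have "cycle_count s A j = c j" for j
        using C orbits_in_Union[OF ps sub] unfolding cycle_count_def R_def by simp
      ultimately show "A \<in> L" unfolding L_def by blast
    qed
  qed
  have "card L = card R" using bij_betw_same_card[OF bij] .
  also have "card R = (\<Prod>j\<in>J. card {x\<in>\<Omega>. card x = j} choose c j)"
    unfolding R_def by (rule card_subsets_with_fibre_sizes[OF fO J c])
  also have "\<dots> = (\<Prod>j\<in>J. num_cycles n s j choose c j)"
  proof (intro prod.cong refl)
    fix j
    have "{x\<in>\<Omega>. card x = j} = {orbit_of s a | a. a < n \<and> card (orbit_of s a) = j}"
      unfolding \<Omega>_def orbits_in_def using orbit_of_eq_orbit[OF ps] by auto
    then show "card {x\<in>\<Omega>. card x = j} choose c j = num_cycles n s j choose c j"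
      unfolding num_cycles_def by simp
  qed
  finally show ?thesis unfolding L_def .
qed

definition slice :: "(nat \<times> nat) set \<Rightarrow> nat \<Rightarrow> nat set" where
  "slice T i = {a. (i, a) \<in> T}"

definition cycle_type :: "nat \<Rightarrow> (nat \<Rightarrow> nat \<Rightarrow> nat) \<Rightarrow> (nat \<times> nat) set \<Rightarrow> nat \<times> nat \<Rightarrow> nat" where
  "cycle_type m \<sigma> T = (\<lambda>(i, j). if i < m then cycle_count (\<sigma> i) (slice T i) j else 0)"

lemma slice_subset: "T \<subseteq> elems m d \<Longrightarrow> i < m \<Longrightarrow> slice T i \<subseteq> {..<d i}"
  unfolding slice_def elems_def by auto

lemma card_slice_le: assumes "finite T" shows "card (slice T i) \<le> card T"
proof -
  have "inj_on (\<lambda>a. (i, a)) (slice T i)" by (rule inj_onI) simp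
  moreover have "(\<lambda>a. (i, a)) ` slice T i \<subseteq> T" unfolding slice_def by blast
  ultimately show ?thesis using assms by (rule card_inj_on_le)
qed

lemma perm_elem_stable_iff_slices:
  assumes "T \<subseteq> elems m d"
  shows "perm_elem \<sigma> ` T \<subseteq> T \<longleftrightarrow> (\<forall>i<m. \<sigma> i ` slice T i \<subseteq> slice T i)"
  using assms unfolding slice_def elems_def by (auto simp: image_subset_iff)

lemma permutes_Sd: "\<sigma> \<in> Sd m d \<Longrightarrow> i < m \<Longrightarrow> \<sigma> i permutes {..<d i}"
  unfolding Sd_def by blast

lemma permutation_Sd: "\<sigma> \<in> Sd m d \<Longrightarrow> i < m \<Longrightarrow> permutation (\<sigma> i)"
  using permutes_Sd permutation_permutes by blast

lemma cycle_type_eq_iff: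
  assumes "\<And>i j. m \<le> i \<Longrightarrow> c (i, j) = 0"
  shows "cycle_type m \<sigma> T = c \<longleftrightarrow> (\<forall>i<m. \<forall>j. cycle_count (\<sigma> i) (slice T i) j = c (i, j))"
proof
  assume "cycle_type m \<sigma> T = c" then show "\<forall>i<m. \<forall>j. cycle_count (\<sigma> i) (slice T i) j = c (i, j)"
    unfolding cycle_type_def by (auto dest: fun_cong[where x="(_, _)"])
next
  assume "\<forall>i<m. \<forall>j. cycle_count (\<sigma> i) (slice T i) j = c (i, j)"
  then show "cycle_type m \<sigma> T = c"
    using assms by (auto simp: cycle_type_def fun_eq_iff not_less)
qed

lemma card_stable_with_cycle_type:
  assumes \<sigma>: "\<sigma> \<in> Sd m d" and J: "finite J"
    and c: "\<And>i j. (i, j) \<notin> {..<m} \<times> J \<Longrightarrow> c (i, j) = 0"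
  shows "card {T. T \<subseteq> elems m d \<and> perm_elem \<sigma> ` T \<subseteq> T \<and> cycle_type m \<sigma> T = c} =
     (\<Prod>v\<in>{..<m} \<times> J. X_var d \<sigma> v choose c v)"
proof -
  define L where "L = {T. T \<subseteq> elems m d \<and> perm_elem \<sigma> ` T \<subseteq> T \<and> cycle_type m \<sigma> T = c}"
  define B where "B i = {A. A \<subseteq> {..<d i} \<and> \<sigma> i ` A \<subseteq> A \<and> (\<forall>j. cycle_count (\<sigma> i) A j = c (i, j))}" for i
  define R where "R = (\<Pi>\<^sub>E i\<in>{..<m}. B i)"
  define \<phi> where "\<phi> T = restrict (slice T) {..<m}" for T
  define \<psi> where "\<psi> \<Phi> = {(i, a). i < m \<and> a \<in> \<Phi> i}" for \<Phi> :: "nat \<Rightarrow> nat set"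
  have "\<And>i j. m \<le> i \<Longrightarrow> c (i, j) = 0" using c by simp
  note ct = cycle_type_eq_iff[where c=c and \<sigma>=\<sigma>, OF this]
  have bij: "bij_betw \<phi> L R"
  proof (rule bij_betw_byWitness[where f' = \<psi>])
    show "\<forall>T\<in>L. \<psi> (\<phi> T) = T"
      unfolding L_def \<psi>_def \<phi>_def slice_def elems_def by auto
    show "\<forall>\<Phi>\<in>R. \<phi> (\<psi> \<Phi>) = \<Phi>"
      unfolding R_def \<psi>_def \<phi>_def slice_def by (auto simp: PiE_def extensional_def fun_eq_iff)
    show "\<phi> ` L \<subseteq> R"
    proof
      fix \<Phi> assume "\<Phi> \<in> \<phi> ` L"
      then obtain T where T: "T \<in> L" "\<Phi> = \<phi> T" by blast
      have TL: "T \<subseteq> elems m d" "perm_elem \<sigma> ` T \<subseteq> T" "cycle_type m \<sigma> T = c" using T(1) unfolding L_def by auto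
      have "slice T i \<in> B i" if i: "i < m" for i
      proof -
        have "slice T i \<subseteq> {..<d i}" using slice_subset[OF TL(1) i] .
        moreover have "\<sigma> i ` slice T i \<subseteq> slice T i" using perm_elem_stable_iff_slices[OF TL(1)] TL(2) i by blast
        moreover have "\<forall>j. cycle_count (\<sigma> i) (slice T i) j = c (i, j)" using ct TL(3) i by blast
        ultimately show ?thesis unfolding B_def by blast
      qed
      then show "\<Phi> \<in> R" unfolding R_def T(2) \<phi>_def by auto
    qed
    show "\<psi> ` R \<subseteq> L"
    proof
      fix T assume "T \<in> \<psi> ` R"
      then obtain \<Phi> where \<Phi>: "\<Phi> \<in> R" "T = \<psi> \<Phi>" by blast
      have slT: "i < m \<Longrightarrow> slice T i = \<Phi> i" for i unfolding \<Phi>(2) \<psi>_def slice_def by auto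
      have Bi: "i < m \<Longrightarrow> \<Phi> i \<in> B i" for i using \<Phi>(1) unfolding R_def by auto
      have sub: "T \<subseteq> elems m d"
        using Bi unfolding \<Phi>(2) \<psi>_def elems_def B_def by auto
      moreover have "perm_elem \<sigma> ` T \<subseteq> T"
        using perm_elem_stable_iff_slices[OF sub] slT Bi unfolding B_def by auto
      moreover have "cycle_type m \<sigma> T = c"
        using slT Bi by (simp add: ct B_def)
      ultimately show "T \<in> L" unfolding L_def by blast
    qed
  qed
  have "card L = card R" using bij_betw_same_card[OF bij] .
  also have "card R = (\<Prod>i<m. card (B i))" unfolding R_def by (rule card_PiE) simp
  also have "\<dots> = (\<Prod>i<m. \<Prod>j\<in>J. num_cycles (d i) (\<sigma> i) j choose c (i, j))"
    unfolding B_def using permutes_Sd[OF \<sigma>] c J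
    by (intro prod.cong refl card_stable_subsets_with_cycle_counts) auto
  also have "\<dots> = (\<Prod>v\<in>{..<m} \<times> J. X_var d \<sigma> v choose c v)"
    unfolding X_var_def by (simp add: prod.cartesian_product case_prod_beta)
  finally show ?thesis unfolding L_def .
qed

lemma conj_of_cycle_type_eq:
  assumes \<sigma>: "\<sigma> \<in> Sd m d" and \<sigma>': "\<sigma>' \<in> Sd m d'"
    and T: "T \<subseteq> elems m d" and T': "T' \<subseteq> elems m d'"
    and st: "perm_elem \<sigma> ` T \<subseteq> T" and st': "perm_elem \<sigma>' ` T' \<subseteq> T'"
    and ct: "cycle_type m \<sigma> T = cycle_type m \<sigma>' T'"
  shows "\<exists>\<rho>. bij_betw \<rho> T T' \<and> (\<forall>x\<in>T. fst (\<rho> x) = fst x) \<and> (\<forall>x\<in>T. \<rho> (perm_elem \<sigma> x) = perm_elem \<sigma>' (\<rho> x))"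
proof -
  have "\<exists>r. bij_betw r (slice T i) (slice T' i) \<and> (\<forall>x\<in>slice T i. r (\<sigma> i x) = \<sigma>' i (r x))"
    if i: "i < m" for i
  proof -
    have "cycle_count (\<sigma> i) (slice T i) j = cycle_count (\<sigma>' i) (slice T' i) j" for j
      using fun_cong[OF ct, of "(i, j)"] i unfolding cycle_type_def by simp
    moreover have "finite (slice T i)" "finite (slice T' i)"
      using finite_subset[OF slice_subset[OF T i]] finite_subset[OF slice_subset[OF T' i]] by auto
    moreover have "\<sigma> i ` slice T i \<subseteq> slice T i" "\<sigma>' i ` slice T' i \<subseteq> slice T' i"
      using i perm_elem_stable_iff_slices[OF T] perm_elem_stable_iff_slices[OF T'] st st' by auto
    ultimately obtain r where "bij_betw r (slice T i) (slice T' i)"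
      "\<And>x. x \<in> slice T i \<Longrightarrow> r (\<sigma> i x) = \<sigma>' i (r x)"
      using conj_of_cycle_count_eq[OF permutation_Sd[OF \<sigma> i] permutation_Sd[OF \<sigma>' i]] by metis
    then show ?thesis by blast
  qed
  then obtain R where R: "\<And>i. i < m \<Longrightarrow> bij_betw (R i) (slice T i) (slice T' i) \<and> (\<forall>x\<in>slice T i. R i (\<sigma> i x) = \<sigma>' i (R i x))"
    by metis
  define \<rho> where "\<rho> = (\<lambda>(i, a). (i, R i a))"
  have memT: "(i, a) \<in> T \<longleftrightarrow> i < m \<and> a \<in> slice T i" for i a using T unfolding slice_def elems_def by auto
  have memT': "(i, a) \<in> T' \<longleftrightarrow> i < m \<and> a \<in> slice T' i" for i a using T' unfolding slice_def elems_def by auto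
  have inj: "inj_on \<rho> T"
  proof (rule inj_onI)
    fix x y assume x: "x \<in> T" and y: "y \<in> T" and eq: "\<rho> x = \<rho> y"
    obtain i a j b where xy: "x = (i, a)" "y = (j, b)" by fastforce
    then have "i = j" "R i a = R i b" using eq unfolding \<rho>_def by auto
    moreover have "i < m" "a \<in> slice T i" "b \<in> slice T i" using x y xy memT \<open>i = j\<close> by auto
    ultimately show "x = y" using R[of i] xy unfolding bij_betw_def inj_on_def by auto
  qed
  have img: "\<rho> ` T = T'"
  proof
    show "\<rho> ` T \<subseteq> T'"
    proof
      fix y assume "y \<in> \<rho> ` T"
      then obtain i a where "(i, a) \<in> T" "y = (i, R i a)" unfolding \<rho>_def by auto
      then show "y \<in> T'" using R memT memT' unfolding bij_betw_def by auto
    qed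
    show "T' \<subseteq> \<rho> ` T"
    proof
      fix y assume y: "y \<in> T'"
      obtain i b where yi: "y = (i, b)" by fastforce
      then have i: "i < m" "b \<in> slice T' i" using y memT' by auto
      have "b \<in> R i ` slice T i" using R[OF i(1)] i(2) unfolding bij_betw_def by simp
      then obtain a where "a \<in> slice T i" "R i a = b" by blast
      then have "(i, a) \<in> T" "\<rho> (i, a) = y" using i memT yi unfolding \<rho>_def by auto
      then show "y \<in> \<rho> ` T" by force
    qed
  qed
  have comm: "\<forall>x\<in>T. \<rho> (perm_elem \<sigma> x) = perm_elem \<sigma>' (\<rho> x)"
  proof
    fix x assume x: "x \<in> T"
    obtain i a where xi: "x = (i, a)" by fastforce
    then have "i < m" "a \<in> slice T i" using x memT by auto
    then show "\<rho> (perm_elem \<sigma> x) = perm_elem \<sigma>' (\<rho> x)" using R xi unfolding \<rho>_def by auto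
  qed
  have "\<forall>x\<in>T. fst (\<rho> x) = fst x" unfolding \<rho>_def by auto
  then show ?thesis using inj img comm unfolding bij_betw_def by blast
qed

section \<open>Character polynomials\<close>

definition charpoly_vars :: "nat \<Rightarrow> (nat \<times> nat) set" where
  "charpoly_vars m = {(i, j). i < m \<and> 1 \<le> j}"

definition eval_monomial :: "((nat \<times> nat) \<Rightarrow>\<^sub>0 nat) \<Rightarrow> (nat \<Rightarrow> nat) \<Rightarrow> (nat \<Rightarrow> nat \<Rightarrow> nat) \<Rightarrow> 'k::comm_ring_1" where
  "eval_monomial mn d \<sigma> = (\<Prod>v\<in>Poly_Mapping.keys mn. of_nat (X_var d \<sigma> v) ^ Poly_Mapping.lookup mn v)"

definition is_charpoly_fun :: "nat \<Rightarrow> ((nat \<Rightarrow> nat) \<Rightarrow> (nat \<Rightarrow> nat \<Rightarrow> nat) \<Rightarrow> 'k::comm_ring_1) \<Rightarrow> bool" where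
  "is_charpoly_fun m f \<longleftrightarrow> (\<exists>P :: ((nat \<times> nat) \<Rightarrow>\<^sub>0 nat) \<Rightarrow>\<^sub>0 'k. is_charpoly m P \<and> (\<forall>d \<sigma>. eval_charpoly P d \<sigma> = f d \<sigma>))"

lemma eval_charpoly_monomials: "eval_charpoly P d \<sigma> = (\<Sum>mn\<in>Poly_Mapping.keys P. Poly_Mapping.lookup P mn * eval_monomial mn d \<sigma>)"
  unfolding eval_charpoly_def eval_monomial_def ..

lemma eval_charpoly_superset:
  assumes "finite K" "Poly_Mapping.keys P \<subseteq> K"
  shows "eval_charpoly P d \<sigma> = (\<Sum>mn\<in>K. Poly_Mapping.lookup P mn * eval_monomial mn d \<sigma>)"
  unfolding eval_charpoly_monomials using assms
  by (intro sum.mono_neutral_left) (auto simp: in_keys_iff)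

lemma eval_monomial_superset:
  assumes "finite K" "Poly_Mapping.keys mn \<subseteq> K"
  shows "eval_monomial mn d \<sigma> = (\<Prod>v\<in>K. (of_nat (X_var d \<sigma> v) :: 'k::comm_ring_1) ^ Poly_Mapping.lookup mn v)"
  unfolding eval_monomial_def using assms
  by (intro prod.mono_neutral_left) (auto simp: in_keys_iff)

lemma eval_monomial_add: "(eval_monomial (a + b) d \<sigma> :: 'k::comm_ring_1) = eval_monomial a d \<sigma> * eval_monomial b d \<sigma>"
proof -
  define K where "K = Poly_Mapping.keys a \<union> Poly_Mapping.keys b"
  have fK: "finite K" unfolding K_def by simp
  have sub: "Poly_Mapping.keys a \<subseteq> K" "Poly_Mapping.keys b \<subseteq> K" "Poly_Mapping.keys (a + b) \<subseteq> K"
    using keys_add[of a b] unfolding K_def by auto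
  show ?thesis
    unfolding eval_monomial_superset[OF fK sub(1)] eval_monomial_superset[OF fK sub(2)]
      eval_monomial_superset[OF fK sub(3)]
    by (simp add: lookup_add power_add prod.distrib)
qed

lemma eval_charpoly_add: "eval_charpoly (P + Q) d \<sigma> = eval_charpoly P d \<sigma> + eval_charpoly Q d \<sigma>"
proof -
  define K where "K = Poly_Mapping.keys P \<union> Poly_Mapping.keys Q"
  have fK: "finite K" unfolding K_def by simp
  have sub: "Poly_Mapping.keys P \<subseteq> K" "Poly_Mapping.keys Q \<subseteq> K" "Poly_Mapping.keys (P + Q) \<subseteq> K"
    using keys_add[of P Q] unfolding K_def by auto
  show ?thesis
    unfolding eval_charpoly_superset[OF fK sub(1)] eval_charpoly_superset[OF fK sub(2)]
      eval_charpoly_superset[OF fK sub(3)]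
    by (simp add: lookup_add distrib_right sum.distrib)
qed

lemma is_charpoly_fun_zero: "is_charpoly_fun m (\<lambda>d \<sigma>. 0)"
  unfolding is_charpoly_fun_def is_charpoly_def eval_charpoly_def by (intro exI[of _ 0]) simp

lemma is_charpoly_fun_add:
  assumes "is_charpoly_fun m f" "is_charpoly_fun m g" shows "is_charpoly_fun m (\<lambda>d \<sigma>. f d \<sigma> + g d \<sigma>)"
proof -
  obtain P where P: "is_charpoly m P" "\<And>d \<sigma>. eval_charpoly P d \<sigma> = f d \<sigma>"
    using assms(1) unfolding is_charpoly_fun_def by blast
  obtain Q where Q: "is_charpoly m Q" "\<And>d \<sigma>. eval_charpoly Q d \<sigma> = g d \<sigma>"
    using assms(2) unfolding is_charpoly_fun_def by blast
  have "is_charpoly m (P + Q)" using P(1) Q(1) keys_add[of P Q] unfolding is_charpoly_def by blast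
  then show ?thesis using P(2) Q(2) unfolding is_charpoly_fun_def by (auto simp: eval_charpoly_add)
qed

lemma is_charpoly_fun_monomial:
  assumes "Poly_Mapping.keys mn \<subseteq> charpoly_vars m"
  shows "is_charpoly_fun m (\<lambda>d \<sigma>. c * eval_monomial mn d \<sigma>)"
proof -
  have ch: "is_charpoly m (Poly_Mapping.single mn c)"
    using assms unfolding is_charpoly_def charpoly_vars_def by auto
  have "eval_charpoly (Poly_Mapping.single mn c) d \<sigma> = c * eval_monomial mn d \<sigma>" for d \<sigma>
    by (subst eval_charpoly_superset[of "{mn}"]) auto
  then show ?thesis using ch unfolding is_charpoly_fun_def by blast
qed

lemma is_charpoly_fun_sum:
  assumes "\<And>i. i \<in> I \<Longrightarrow> is_charpoly_fun m (f i)"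
  shows "is_charpoly_fun m (\<lambda>d \<sigma>. \<Sum>i\<in>I. f i d \<sigma>)"
  using assms
proof (induction I rule: infinite_finite_induct)
  case (infinite A) then show ?case using is_charpoly_fun_zero by simp
next
  case empty then show ?case using is_charpoly_fun_zero by simp
next
  case (insert a A)
  then have "is_charpoly_fun m (\<lambda>d \<sigma>. f a d \<sigma> + (\<Sum>i\<in>A. f i d \<sigma>))" by (intro is_charpoly_fun_add) auto
  then show ?case using insert by simp
qed

lemma is_charpoly_fun_cong: "is_charpoly_fun m f \<Longrightarrow> (\<And>d \<sigma>. f d \<sigma> = g d \<sigma>) \<Longrightarrow> is_charpoly_fun m g"
  unfolding is_charpoly_fun_def by simp

lemma is_charpoly_fun_mult:
  assumes "is_charpoly_fun m f" "is_charpoly_fun m g" shows "is_charpoly_fun m (\<lambda>d \<sigma>. f d \<sigma> * g d \<sigma>)"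
proof -
  obtain P where P: "is_charpoly m P" "\<And>d \<sigma>. eval_charpoly P d \<sigma> = f d \<sigma>" using assms(1) unfolding is_charpoly_fun_def by blast
  obtain Q where Q: "is_charpoly m Q" "\<And>d \<sigma>. eval_charpoly Q d \<sigma> = g d \<sigma>" using assms(2) unfolding is_charpoly_fun_def by blast
  have eq: "f d \<sigma> * g d \<sigma> = (\<Sum>a\<in>Poly_Mapping.keys P. \<Sum>b\<in>Poly_Mapping.keys Q.
      (Poly_Mapping.lookup P a * Poly_Mapping.lookup Q b) * eval_monomial (a + b) d \<sigma>)" for d \<sigma>
    unfolding P(2)[symmetric] Q(2)[symmetric] eval_charpoly_monomials sum_product eval_monomial_add
    by (intro sum.cong refl) (simp add: ac_simps)
  have "is_charpoly_fun m (\<lambda>d \<sigma>. \<Sum>a\<in>Poly_Mapping.keys P. \<Sum>b\<in>Poly_Mapping.keys Q.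
      (Poly_Mapping.lookup P a * Poly_Mapping.lookup Q b) * eval_monomial (a + b) d \<sigma>)"
  proof (intro is_charpoly_fun_sum is_charpoly_fun_monomial)
    fix a b assume a: "a \<in> Poly_Mapping.keys P" and b: "b \<in> Poly_Mapping.keys Q"
    show "Poly_Mapping.keys (a + b) \<subseteq> charpoly_vars m"
      using keys_add[of a b] P(1) Q(1) a b unfolding is_charpoly_def charpoly_vars_def by blast
  qed
  then show ?thesis by (rule is_charpoly_fun_cong) (simp add: eq)
qed

lemma is_charpoly_fun_const: "is_charpoly_fun m (\<lambda>d \<sigma>. c)"
  using is_charpoly_fun_monomial[of 0 m c] by (simp add: eval_monomial_def)

lemma is_charpoly_fun_var:
  assumes "v \<in> charpoly_vars m" shows "is_charpoly_fun m (\<lambda>d \<sigma>. of_nat (X_var d \<sigma> v))"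
  using is_charpoly_fun_monomial[of "Poly_Mapping.single v 1" m 1] assms by (simp add: eval_monomial_def)

lemma is_charpoly_fun_prod:
  assumes "\<And>i. i \<in> I \<Longrightarrow> is_charpoly_fun m (f i)"
  shows "is_charpoly_fun m (\<lambda>d \<sigma>. \<Prod>i\<in>I. f i d \<sigma>)"
  using assms
proof (induction I rule: infinite_finite_induct)
  case (infinite A) then show ?case using is_charpoly_fun_const by simp
next
  case empty then show ?case using is_charpoly_fun_const by simp
next
  case (insert a A)
  then have "is_charpoly_fun m (\<lambda>d \<sigma>. f a d \<sigma> * (\<Prod>i\<in>A. f i d \<sigma>))" by (intro is_charpoly_fun_mult) auto
  then show ?case using insert by simp
qed

lemma is_charpoly_fun_binomial:
  assumes "v \<in> charpoly_vars m"
  shows "is_charpoly_fun m (\<lambda>d \<sigma>. (of_nat (X_var d \<sigma> v choose n) :: 'k::field_char_0))"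
proof -
  have "is_charpoly_fun m (\<lambda>d \<sigma>. (inverse (fact n) :: 'k) * (\<Prod>i\<in>{0..<n}. of_nat (X_var d \<sigma> v) + (- of_nat i)))"
    by (intro is_charpoly_fun_mult is_charpoly_fun_const is_charpoly_fun_prod is_charpoly_fun_add is_charpoly_fun_var assms)
  then show ?thesis
    by (rule is_charpoly_fun_cong) (simp add: binomial_gbinomial gbinomial_prod_rev field_simps)
qed

section \<open>The character formula\<close>

context fg_FIsharp_module
begin

definition stable_config :: "(nat \<Rightarrow> nat) \<Rightarrow> (nat \<Rightarrow> nat \<Rightarrow> nat) \<Rightarrow> (nat \<times> nat) set \<Rightarrow> bool" where
  "stable_config d \<sigma> T \<longleftrightarrow> d \<in> objs m \<and> \<sigma> \<in> Sd m d \<and> T \<subseteq> elems m d \<and> perm_elem \<sigma> ` T = T"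

definition local_trace :: "(nat \<Rightarrow> nat) \<Rightarrow> (nat \<Rightarrow> nat \<Rightarrow> nat) \<Rightarrow> (nat \<times> nat) set \<Rightarrow> 'k" where
  "local_trace d \<sigma> T = tr d (perm_op d \<sigma> \<circ> proj_op d T)"

lemma local_trace_eq_of_cycle_type_eq:
  assumes "stable_config d \<sigma> T" "stable_config d' \<sigma>' T'" "cycle_type m \<sigma> T = cycle_type m \<sigma>' T'"
  shows "local_trace d \<sigma> T = local_trace d' \<sigma>' T'"
proof -
  have c: "d \<in> objs m" "\<sigma> \<in> Sd m d" "T \<subseteq> elems m d" "perm_elem \<sigma> ` T = T"
    and c': "d' \<in> objs m" "\<sigma>' \<in> Sd m d'" "T' \<subseteq> elems m d'" "perm_elem \<sigma>' ` T' = T'"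
    using assms(1,2) unfolding stable_config_def by auto
  obtain \<rho> where \<rho>: "bij_betw \<rho> T T'" "\<forall>x\<in>T. fst (\<rho> x) = fst x" "\<forall>x\<in>T. \<rho> (perm_elem \<sigma> x) = perm_elem \<sigma>' (\<rho> x)"
    using conj_of_cycle_type_eq[OF c(2) c'(2) c(3) c'(3) _ _ assms(3)] c(4) c'(4) by auto
  show ?thesis unfolding local_trace_def
    by (rule trace_perm_op_proj_op_transport[OF c(1) c'(1) c(2) c'(2) c(3) c'(3) c(4) \<rho>(1)]) (use \<rho> in auto)
qed

text \<open>Well defined by the previous lemma. On cycle types of no stable configuration the value
  is unspecified; such types occur with multiplicity 0 in the character formula.\<close>

definition trace_of_type :: "(nat \<times> nat \<Rightarrow> nat) \<Rightarrow> 'k" where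
  "trace_of_type c = (SOME t. \<forall>d \<sigma> T. stable_config d \<sigma> T \<and> cycle_type m \<sigma> T = c \<longrightarrow> local_trace d \<sigma> T = t)"

lemma trace_of_type:
  assumes "stable_config d \<sigma> T"
  shows "trace_of_type (cycle_type m \<sigma> T) = local_trace d \<sigma> T"
proof -
  let ?P = "\<lambda>t. \<forall>d' \<sigma>' T'. stable_config d' \<sigma>' T' \<and> cycle_type m \<sigma>' T' = cycle_type m \<sigma> T \<longrightarrow>
    local_trace d' \<sigma>' T' = t"
  have "?P (local_trace d \<sigma> T)" using local_trace_eq_of_cycle_type_eq assms by blast
  then have "?P (trace_of_type (cycle_type m \<sigma> T))" unfolding trace_of_type_def by (rule someI)
  then show ?thesis using assms by auto
qed

definition type_vars :: "(nat \<times> nat) set" where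
  "type_vars = {..<m} \<times> {1..gen_bound}"

definition bounded_types :: "(nat \<times> nat \<Rightarrow> nat) set" where
  "bounded_types = {c. \<forall>v. c v \<le> gen_bound \<and> (v \<notin> type_vars \<longrightarrow> c v = 0)}"

lemma finite_bounded_types: "finite bounded_types"
proof -
  have "bounded_types \<subseteq> (\<lambda>g v. if v \<in> type_vars then g v else 0) ` (\<Pi>\<^sub>E v\<in>type_vars. {..gen_bound})"
  proof
    fix c assume c: "c \<in> bounded_types"
    then have "c = (\<lambda>v. if v \<in> type_vars then restrict c type_vars v else 0)"
      unfolding bounded_types_def by (auto simp: fun_eq_iff)
    moreover have "restrict c type_vars \<in> (\<Pi>\<^sub>E v\<in>type_vars. {..gen_bound})"
      using c unfolding bounded_types_def by auto
    ultimately show "c \<in> (\<lambda>g v. if v \<in> type_vars then g v else 0) ` (\<Pi>\<^sub>E v\<in>type_vars. {..gen_bound})"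
      by blast
  qed
  moreover have "finite type_vars" unfolding type_vars_def by simp
  ultimately show ?thesis by (rule finite_subset[OF _ finite_imageI[OF finite_PiE]]) auto
qed

lemma cycle_type_in_bounded_types:
  assumes c: "stable_config d \<sigma> T" and small: "card T \<le> gen_bound"
  shows "cycle_type m \<sigma> T \<in> bounded_types"
proof -
  have \<sigma>: "\<sigma> \<in> Sd m d" and T: "T \<subseteq> elems m d" and stable: "perm_elem \<sigma> ` T = T"
    using c unfolding stable_config_def by auto
  have fT: "finite T" using T finite_elems by (rule finite_subset)
  have bound: "cycle_count (\<sigma> i) (slice T i) j \<le> gen_bound \<and>
      (j \<notin> {1..gen_bound} \<longrightarrow> cycle_count (\<sigma> i) (slice T i) j = 0)" if i: "i < m" for i j
  proof -
    have fin: "finite (slice T i)" using finite_subset[OF slice_subset[OF T i]] by simp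
    have le: "card (slice T i) \<le> gen_bound" using card_slice_le[OF fT, of i] small by simp
    have stab: "\<sigma> i ` slice T i \<subseteq> slice T i" using perm_elem_stable_iff_slices[OF T] stable i by blast
    have "cycle_count (\<sigma> i) (slice T i) j \<le> gen_bound"
      using cycle_count_le_card[OF fin] le by (rule order_trans)
    moreover have "cycle_count (\<sigma> i) (slice T i) j = 0" if "j \<notin> {1..gen_bound}"
      by (rule cycle_count_eq_0[OF permutation_Sd[OF \<sigma> i] fin stab]) (use that le in auto)
    ultimately show ?thesis by blast
  qed
  show ?thesis
    unfolding bounded_types_def
  proof (intro CollectI allI)
    fix v :: "nat \<times> nat"
    obtain i j where v: "v = (i, j)" by fastforce
    show "cycle_type m \<sigma> T v \<le> gen_bound \<and> (v \<notin> type_vars \<longrightarrow> cycle_type m \<sigma> T v = 0)"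
      using bound[of i j] unfolding v cycle_type_def type_vars_def by auto
  qed
qed

lemma character_eq_sum_stable:
  assumes d: "d \<in> objs m" and \<sigma>: "\<sigma> \<in> Sd m d"
  shows "character scale m V F d \<sigma> =
    (\<Sum>T \<in> {T. T \<subseteq> elems m d \<and> perm_elem \<sigma> ` T \<subseteq> T}. trace_of_type (cycle_type m \<sigma> T))"
proof -
  have fE: "finite (Pow (elems m d))" using finite_elems by simp
  have "character scale m V F d \<sigma> = (\<Sum>T\<in>Pow (elems m d). local_trace d \<sigma> T)"
    unfolding character_def local_trace_def perm_op_def[symmetric] by (rule trace_perm_op_eq_sum[OF d \<sigma>])
  also have "\<dots> = (\<Sum>T\<in>Pow (elems m d). if perm_elem \<sigma> ` T \<subseteq> T then trace_of_type (cycle_type m \<sigma> T) else 0)"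
  proof (intro sum.cong refl)
    fix T assume "T \<in> Pow (elems m d)"
    then have T: "T \<subseteq> elems m d" by simp
    show "local_trace d \<sigma> T = (if perm_elem \<sigma> ` T \<subseteq> T then trace_of_type (cycle_type m \<sigma> T) else 0)"
      using trace_of_type[of d \<sigma> T] trace_perm_op_proj_op_unstable[OF d \<sigma> T]
        perm_elem_image_eq_iff[OF \<sigma> T] d \<sigma> T
      unfolding stable_config_def local_trace_def by auto
  qed
  also have "\<dots> = (\<Sum>T \<in> {T. T \<subseteq> elems m d \<and> perm_elem \<sigma> ` T \<subseteq> T}. trace_of_type (cycle_type m \<sigma> T))"
    using fE by (simp add: sum.inter_filter[symmetric] Pow_def conj_commute)
  finally show ?thesis .
qed

lemma character_eq_sum_types:
  assumes d: "d \<in> objs m" and \<sigma>: "\<sigma> \<in> Sd m d"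
  shows "character scale m V F d \<sigma> =
    (\<Sum>c\<in>bounded_types. trace_of_type c * (\<Prod>v\<in>type_vars. of_nat (X_var d \<sigma> v choose c v)))"
proof -
  define S where "S = {T. T \<subseteq> elems m d \<and> perm_elem \<sigma> ` T \<subseteq> T}"
  define S' where "S' = {T \<in> S. cycle_type m \<sigma> T \<in> bounded_types}"
  have "S \<subseteq> Pow (elems m d)" unfolding S_def by blast
  then have fS: "finite S" using finite_elems by (simp add: finite_subset)
  have config: "stable_config d \<sigma> T" if "T \<in> S" for T
    using that d \<sigma> perm_elem_image_eq_iff[OF \<sigma>] unfolding S_def stable_config_def by auto
  have zero: "trace_of_type (cycle_type m \<sigma> T) = 0" if T: "T \<in> S - S'" for T
  proof -
    have "gen_bound < card T"
      using T cycle_type_in_bounded_types[OF config] unfolding S'_def by (cases "card T \<le> gen_bound") auto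
    moreover have "T \<subseteq> elems m d" using T unfolding S_def by blast
    ultimately show ?thesis using T trace_of_type[OF config] trace_perm_op_proj_op_large[OF d \<sigma>]
      unfolding local_trace_def by simp
  qed
  have count: "card {T\<in>S. cycle_type m \<sigma> T = c} = (\<Prod>v\<in>type_vars. X_var d \<sigma> v choose c v)"
    if c: "c \<in> bounded_types" for c
  proof -
    have "card {T. T \<subseteq> elems m d \<and> perm_elem \<sigma> ` T \<subseteq> T \<and> cycle_type m \<sigma> T = c} =
        (\<Prod>v\<in>{..<m} \<times> {1..gen_bound}. X_var d \<sigma> v choose c v)"
      using c unfolding bounded_types_def type_vars_def by (intro card_stable_with_cycle_type[OF \<sigma>]) auto
    then show ?thesis unfolding S_def type_vars_def by (simp add: conj_assoc)
  qed
  have "character scale m V F d \<sigma> = (\<Sum>T\<in>S. trace_of_type (cycle_type m \<sigma> T))"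
    unfolding S_def by (rule character_eq_sum_stable[OF d \<sigma>])
  also have "\<dots> = (\<Sum>T\<in>S'. trace_of_type (cycle_type m \<sigma> T))"
    by (rule sum.mono_neutral_right[OF fS _ ballI[OF zero]]) (auto simp: S'_def)
  also have "\<dots> = (\<Sum>c\<in>bounded_types. \<Sum>T | T \<in> S' \<and> cycle_type m \<sigma> T = c. trace_of_type (cycle_type m \<sigma> T))"
    by (rule sum.group[symmetric]) (use fS finite_bounded_types in \<open>auto simp: S'_def\<close>)
  also have "\<dots> = (\<Sum>c\<in>bounded_types. \<Sum>T | T \<in> S \<and> cycle_type m \<sigma> T = c. trace_of_type c)"
    by (intro sum.cong refl) (auto simp: S'_def)
  also have "\<dots> = (\<Sum>c\<in>bounded_types. trace_of_type c * (\<Prod>v\<in>type_vars. of_nat (X_var d \<sigma> v choose c v)))"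
    by (intro sum.cong refl) (simp add: count mult.commute)
  finally show ?thesis .
qed

end

theorem proposition2p3:
  fixes scale :: "'k::field_char_0 \<Rightarrow> 'v::ab_group_add \<Rightarrow> 'v"
    and m :: nat
    and V :: "(nat \<Rightarrow> nat) \<Rightarrow> 'v set"
    and F :: "(nat \<Rightarrow> nat) \<Rightarrow> (nat \<Rightarrow> nat) \<Rightarrow> ((nat \<times> nat) \<rightharpoonup> (nat \<times> nat)) \<Rightarrow> 'v \<Rightarrow> 'v"
  assumes "FIsharp_module scale m V F"
    and "finitely_generated scale m V F"
  shows "\<exists>P :: ((nat \<times> nat) \<Rightarrow>\<^sub>0 nat) \<Rightarrow>\<^sub>0 'k. is_charpoly m P \<and>
           (\<forall>d\<in>objs m. \<forall>\<sigma>\<in>Sd m d. character scale m V F d \<sigma> = eval_charpoly P d \<sigma>)"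
proof -
  interpret fg_FIsharp_module scale m V F
    using assms by (rule fg_FIsharp_moduleI)
  have "is_charpoly_fun m (\<lambda>d \<sigma>. \<Sum>c\<in>bounded_types.
      trace_of_type c * (\<Prod>v\<in>type_vars. (of_nat (X_var d \<sigma> v choose c v) :: 'k)))"
    by (intro is_charpoly_fun_sum is_charpoly_fun_mult is_charpoly_fun_const is_charpoly_fun_prod
        is_charpoly_fun_binomial) (auto simp: type_vars_def charpoly_vars_def)
  then obtain P :: "((nat \<times> nat) \<Rightarrow>\<^sub>0 nat) \<Rightarrow>\<^sub>0 'k" where "is_charpoly m P"
    "\<And>d \<sigma>. eval_charpoly P d \<sigma> = (\<Sum>c\<in>bounded_types.
      trace_of_type c * (\<Prod>v\<in>type_vars. of_nat (X_var d \<sigma> v choose c v)))"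
    unfolding is_charpoly_fun_def by blast
  then show ?thesis using character_eq_sum_types by auto
qed

end
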